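(* Suppose $n\ge3$. For $i\ne j$ define $a_i=\frac{(n-1)(1-\omega_i)\eta}{n}$, $a_{ij}=a_i+a_j$, $$h_{ij}=\begin{cases}\frac{(n-1)\eta}{n}\big[(1-\omega_i)^2+\frac{\omega_i(\omega_j-\omega_i)}{n}\big] & \text{if } r_i<a_i,\\ (1-\omega_i)\eta\big[\frac{1-\omega_i}{n}+\frac{n-2}{n-1}\big]+\frac{\omega_i(n-1)(\omega_j-\omega_i)\eta}{n^2} & \text{if } r_i\in[a_i,a_{ij}),\\ \frac{(n-1)\eta}{n}\big[1-\omega_i+\frac{\omega_j-\omega_i}{n}\big] & \text{if } r_i\ge a_{ij},\end{cases}$$ and $c_{ij}=\min\big\{h_{ij}+h_{ji},\ 1-(a_i-h_{ij})I_{\{a_i>h_{ij}\}}-(a_j-h_{ji})I_{\{a_j>h_{ji}\}}\big\}$ ($I$ the indicator function). For any constant $\varepsilon>0$ let $c_\varepsilon=\max_{i\ne j}c_{ij}-\varepsilon$. Then the set $E_{c_\varepsilon}=\{(x_1,\dots,x_n)\in[0,1]^n:\max_{i,j}|x_i-x_j|\ge c_\varepsilon\}$ is finite-time robustly reachable from $[0,1]^n$ under control protocol (C6).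
   Context: $\mathcal V=\{1,\dots,n\}$, confidence thresholds $r_i\in(0,1]$, belief factors $\omega_i\in(0,1)$, $\eta>0$. States $x(t)\in[0,1]^n$. Neighbor set $\mathcal N_i(t)=\{j:|x_j(t)-x_i(t)|\le r_i\}$ (contains $i$), $\Pi_{[0,1]}(y)=\min\{1,\max\{0,y\}\}$, $x_{\rm ave}(t)=\frac1n\sum_ix_i(t)$. Control protocol (C6): $x_i(t+1)=\Pi_{[0,1]}\big(\omega_ix_{\rm ave}(t)+\frac{1-\omega_i}{|\mathcal N_i(t)|}[x_i(t)+\sum_{j\in\mathcal N_i(t)\setminus\{i\}}(x_j(t)+u_{ji}(t)+b_{ji}(t))]\big)$, where for $j\in\mathcal N_i(t)\setminus\{i\}$: $\delta_i(t)\in(0,\eta)$ is a chosen parameter, $u_{ji}(t)\in[-\eta+\delta_i(t),\eta-\delta_i(t)]$ a chosen control input, $b_{ji}(t)\in[-\delta_i(t),\delta_i(t)]$ an arbitrary uncertainty; the choices may depend on $x(0),\dots,x(t)$. A set $S\subseteq[0,1]^n$ is finite-time robustly reachable from $[0,1]^n$ under the protocol if there exist constants $T>0$ and $\varepsilon'\in(0,\eta)$ such that for every $x(0)\in[0,1]^n$, either $x(0)\in S$, or one can choose $\delta_i(t)\in[\varepsilon',\eta)$ and $u_{ji}(t)\in[-\eta+\delta_i(t),\eta-\delta_i(t)]$ ($0\le t<T$, $i\in\mathcal V$, $j\in\mathcal N_i(t)\setminus\{i\}$) guaranteeing that for arbitrary $b_{ji}(t)\in[-\delta_i(t),\delta_i(t)]$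 there is $t\in[1,T]$ with $x(t)\in S$. *)

theory Defs
  imports Complex_Main
begin

(* Agents are indexed by 0..<n (the paper uses 1..n).  A state is a function
   nat => real; only the coordinates i < n are meaningful. *)

definition in_cube :: "nat \<Rightarrow> (nat \<Rightarrow> real) \<Rightarrow> bool" where
  "in_cube n x \<longleftrightarrow> (\<forall>i<n. 0 \<le> x i \<and> x i \<le> 1)"

definition nbr :: "nat \<Rightarrow> (nat \<Rightarrow> real) \<Rightarrow> (nat \<Rightarrow> real) \<Rightarrow> nat \<Rightarrow> nat set" where
  "nbr n r x i = {j. j < n \<and> \<bar>x j - x i\<bar> \<le> r i}"

definition proj01 :: "real \<Rightarrow> real" where
  "proj01 y = min 1 (max 0 y)"

definition xave :: "nat \<Rightarrow> (nat \<Rightarrow> real) \<Rightarrow> real" where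
  "xave n x = (\<Sum>j<n. x j) / real n"

text \<open>One step of protocol (C6); u j i and b j i are the control input and the
  uncertainty on the edge from j to i.\<close>
definition step :: "nat \<Rightarrow> (nat \<Rightarrow> real) \<Rightarrow> (nat \<Rightarrow> real) \<Rightarrow> (nat \<Rightarrow> real)
    \<Rightarrow> (nat \<Rightarrow> nat \<Rightarrow> real) \<Rightarrow> (nat \<Rightarrow> nat \<Rightarrow> real) \<Rightarrow> nat \<Rightarrow> real" where
  "step n r \<omega> x u b i = proj01 (\<omega> i * xave n x
      + (1 - \<omega> i) / real (card (nbr n r x i))
        * (x i + (\<Sum>j \<in> nbr n r x i - {i}. x j + u j i + b j i)))"

fun hist :: "nat \<Rightarrow> (nat \<Rightarrow> real) \<Rightarrow> (nat \<Rightarrow> real)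
    \<Rightarrow> ((nat \<Rightarrow> real) list \<Rightarrow> nat \<Rightarrow> nat \<Rightarrow> real)
    \<Rightarrow> ((nat \<Rightarrow> real) list \<Rightarrow> nat \<Rightarrow> nat \<Rightarrow> real)
    \<Rightarrow> (nat \<Rightarrow> real) \<Rightarrow> nat \<Rightarrow> (nat \<Rightarrow> real) list" where
  "hist n r \<omega> uS bS x0 0 = [x0]"
| "hist n r \<omega> uS bS x0 (Suc t) =
     (let H = hist n r \<omega> uS bS x0 t in H @ [step n r \<omega> (last H) (uS H) (bS H)])"

text \<open>The controller
  chooses delta_i(t) and u_ji(t) as functions of the history x(0),...,x(t);
  the uncertainty b_ji(t) is arbitrary (modelled as an arbitrary function of the
  history, which covers all possible uncertainty sequences since the controller
  is deterministic).\<close>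
definition ft_robust_reachable ::
  "nat \<Rightarrow> (nat \<Rightarrow> real) \<Rightarrow> (nat \<Rightarrow> real) \<Rightarrow> real \<Rightarrow> (nat \<Rightarrow> real) set \<Rightarrow> bool" where
  "ft_robust_reachable n r \<omega> \<eta> S \<longleftrightarrow>
    (\<exists>T::nat. T > 0 \<and> (\<exists>\<epsilon>'::real. 0 < \<epsilon>' \<and> \<epsilon>' < \<eta> \<and>
      (\<forall>x0. in_cube n x0 \<longrightarrow> x0 \<in> S \<or>
        (\<exists>(\<delta>S :: (nat \<Rightarrow> real) list \<Rightarrow> nat \<Rightarrow> real)
            (uS :: (nat \<Rightarrow> real) list \<Rightarrow> nat \<Rightarrow> nat \<Rightarrow> real).
           (\<forall>H i. i < n \<longrightarrow> \<epsilon>' \<le> \<delta>S H i \<and> \<delta>S H i < \<eta>) \<and>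
           (\<forall>H i j. i < n \<longrightarrow> j < n \<longrightarrow>
               - \<eta> + \<delta>S H i \<le> uS H j i \<and> uS H j i \<le> \<eta> - \<delta>S H i) \<and>
           (\<forall>bS :: (nat \<Rightarrow> real) list \<Rightarrow> nat \<Rightarrow> nat \<Rightarrow> real.
              (\<forall>H i j. i < n \<longrightarrow> j < n \<longrightarrow>
                 - \<delta>S H i \<le> bS H j i \<and> bS H j i \<le> \<delta>S H i) \<longrightarrow>
              (\<exists>t. 1 \<le> t \<and> t \<le> T \<and> last (hist n r \<omega> uS bS x0 t) \<in> S))))))"

definition a_coef :: "nat \<Rightarrow> (nat \<Rightarrow> real) \<Rightarrow> real \<Rightarrow> nat \<Rightarrow> real" where
  "a_coef n \<omega> \<eta> i = (real n - 1) * (1 - \<omega> i) * \<eta> / real n"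

definition h_coef :: "nat \<Rightarrow> (nat \<Rightarrow> real) \<Rightarrow> (nat \<Rightarrow> real) \<Rightarrow> real \<Rightarrow> nat \<Rightarrow> nat \<Rightarrow> real" where
  "h_coef n r \<omega> \<eta> i j =
    (if r i < a_coef n \<omega> \<eta> i then
       (real n - 1) * \<eta> / real n * ((1 - \<omega> i)^2 + \<omega> i * (\<omega> j - \<omega> i) / real n)
     else if r i < a_coef n \<omega> \<eta> i + a_coef n \<omega> \<eta> j then
       (1 - \<omega> i) * \<eta> * ((1 - \<omega> i) / real n + (real n - 2) / (real n - 1))
         + \<omega> i * (real n - 1) * (\<omega> j - \<omega> i) * \<eta> / (real n)^2
     else
       (real n - 1) * \<eta> / real n * (1 - \<omega> i + (\<omega> j - \<omega> i) / real n))"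

definition c_coef :: "nat \<Rightarrow> (nat \<Rightarrow> real) \<Rightarrow> (nat \<Rightarrow> real) \<Rightarrow> real \<Rightarrow> nat \<Rightarrow> nat \<Rightarrow> real" where
  "c_coef n r \<omega> \<eta> i j =
    min (h_coef n r \<omega> \<eta> i j + h_coef n r \<omega> \<eta> j i)
        (1 - (a_coef n \<omega> \<eta> i - h_coef n r \<omega> \<eta> i j)
               * (if a_coef n \<omega> \<eta> i > h_coef n r \<omega> \<eta> i j then 1 else 0)
           - (a_coef n \<omega> \<eta> j - h_coef n r \<omega> \<eta> j i)
               * (if a_coef n \<omega> \<eta> j > h_coef n r \<omega> \<eta> j i then 1 else 0))"

definition c_eps :: "nat \<Rightarrow> (nat \<Rightarrow> real) \<Rightarrow> (nat \<Rightarrow> real) \<Rightarrow> real \<Rightarrow> real \<Rightarrow> real" where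
  "c_eps n r \<omega> \<eta> \<epsilon> = Max {c_coef n r \<omega> \<eta> i j | i j. i < n \<and> j < n \<and> i \<noteq> j} - \<epsilon>"

definition E_set :: "nat \<Rightarrow> real \<Rightarrow> (nat \<Rightarrow> real) set" where
  "E_set n c = {x. in_cube n x \<and> Max {\<bar>x i - x j\<bar> | i j. i < n \<and> j < n} \<ge> c}"

end

theory Submission
  imports Defs
begin

text \<open>
  The control works in three phases. With zero input each agent moves to a convex combination
  of the global mean (weight at least \<open>min \<omega>\<^sub>i\<close>) and a local mean, so the diameter of the
  configuration contracts geometrically up to the noise; after \<open>K\<close> steps every agent sees all the
  others. In this complete neighbour graph the common input \<open>d \<eta> / a\<^sub>k\<close> into agent \<open>k\<close> moves every
  agent to the mean plus \<open>d\<close>, which steers the consensus to a target point \<open>z\<close> in \<open>N\<close> further steps.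
  Finally agent \<open>I\<close> receives the input \<open>\<theta> \<eta>\<close> and agent \<open>J\<close> the input \<open>-\<theta> \<eta>\<close>: after one step they
  sit at \<open>z + \<theta> a\<^sub>I\<close> and \<open>z - \<theta> a\<^sub>J\<close>, after a second step, whose neighbour sets are the three
  cases in the definition of \<open>h\<^sub>i\<^sub>j\<close>, at \<open>z + \<theta> h\<^sub>I\<^sub>J\<close> and \<open>z - \<theta> h\<^sub>J\<^sub>I\<close>. For a suitable \<open>z\<close> one of the
  two gaps, after projection onto \<open>[0,1]\<close>, exceeds \<open>c\<^sub>I\<^sub>J\<close> up to an error that vanishes as
  \<open>\<theta> \<rightarrow> 1\<close> and as the noise bound \<open>\<delta> \<rightarrow> 0\<close>; a pair \<open>I, J\<close> maximising \<open>c\<^sub>I\<^sub>J\<close> then reaches \<open>E\<^sub>c\<^sub>\<epsilon>\<close>.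
\<close>

lemma abs_proj01_diff_le: "\<bar>proj01 a - proj01 b\<bar> \<le> \<bar>a - b\<bar>"
  unfolding proj01_def by (auto simp: min_def max_def)

lemma proj01_mono: "a \<le> b \<Longrightarrow> proj01 a \<le> proj01 b"
  unfolding proj01_def by (auto simp: min_def max_def)

lemma proj01_eq_self: "0 \<le> a \<Longrightarrow> a \<le> 1 \<Longrightarrow> proj01 a = a"
  unfolding proj01_def by auto

lemma proj01_bounds: "0 \<le> proj01 a" "proj01 a \<le> 1"
  unfolding proj01_def by auto

lemma min_le_proj01: "min 1 a \<le> proj01 a"
  and proj01_le_max: "proj01 a \<le> max 0 a"
  unfolding proj01_def by auto

lemma in_cube_step: "in_cube n (step n r \<omega> x u b)"
  unfolding in_cube_def step_def using proj01_bounds by blast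

lemma abs_convex_comb_le:
  fixes w X W s :: real
  assumes "0 \<le> w" "w \<le> 1" "\<bar>X\<bar> \<le> s" "\<bar>W\<bar> \<le> s"
  shows "\<bar>w * X + (1 - w) * W\<bar> \<le> s"
proof -
  have "\<bar>w * X + (1 - w) * W\<bar> \<le> w * \<bar>X\<bar> + (1 - w) * \<bar>W\<bar>"
    using assms(1,2) abs_triangle_ineq[of "w * X" "(1 - w) * W"] by (simp add: abs_mult)
  also have "\<dots> \<le> s"
    using assms by (intro convex_bound_le) auto
  finally show ?thesis .
qed

lemma mean_between:
  fixes x :: "nat \<Rightarrow> real"
  assumes "finite A" "A \<noteq> {}" "\<And>l. l \<in> A \<Longrightarrow> m \<le> x l \<and> x l \<le> M"
  shows "m \<le> (\<Sum>l\<in>A. x l) / real (card A)" "(\<Sum>l\<in>A. x l) / real (card A) \<le> M"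
proof -
  have card: "0 < real (card A)"
    using assms(1,2) by (simp add: card_gt_0_iff)
  have "real (card A) * m \<le> (\<Sum>l\<in>A. x l)" "(\<Sum>l\<in>A. x l) \<le> real (card A) * M"
    using sum_bounded_below[of A m x] sum_bounded_above[of A x M] assms(3) by auto
  then show "m \<le> (\<Sum>l\<in>A. x l) / real (card A)" "(\<Sum>l\<in>A. x l) / real (card A) \<le> M"
    using card by (simp_all add: pos_le_divide_eq pos_divide_le_eq mult.commute)
qed

lemma xave_between:
  assumes "0 < n" "\<forall>l<n. m \<le> x l \<and> x l \<le> M"
  shows "m \<le> xave n x" "xave n x \<le> M"
  using mean_between[of "{..<n}" m x M] assms unfolding xave_def by auto

lemma xave_const: "0 < n \<Longrightarrow> xave n (\<lambda>_. z) = z"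
  unfolding xave_def by simp

lemma abs_xave_diff_le:
  assumes "0 < n" "\<forall>l<n. \<bar>x l - y l\<bar> \<le> \<sigma>"
  shows "\<bar>xave n x - xave n y\<bar> \<le> \<sigma>"
proof -
  have "\<bar>\<Sum>l<n. x l - y l\<bar> \<le> real n * \<sigma>"
    using sum_norm_bound[of "{..<n}" "\<lambda>l. x l - y l" \<sigma>] assms(2) by simp
  moreover have "xave n x - xave n y = (\<Sum>l<n. x l - y l) / real n"
    unfolding xave_def by (simp add: sum_subtractf diff_divide_distrib)
  ultimately show ?thesis
    using assms(1) by (simp add: pos_divide_le_eq mult.commute)
qed

lemma finite_nbr: "finite (nbr n r x i)"
  unfolding nbr_def by auto

lemma self_in_nbr: "i < n \<Longrightarrow> 0 \<le> r i \<Longrightarrow> i \<in> nbr n r x i"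
  unfolding nbr_def by auto

lemma nbr_subset: "nbr n r x i \<subseteq> {..<n}"
  unfolding nbr_def by auto

lemma nbr_eq_lessThan: "\<forall>l<n. \<bar>x l - x k\<bar> \<le> r k \<Longrightarrow> nbr n r x k = {..<n}"
  unfolding nbr_def by auto

section \<open>One step of the protocol under perturbation\<close>

definition step_arg :: "nat \<Rightarrow> (nat \<Rightarrow> real) \<Rightarrow> (nat \<Rightarrow> real) \<Rightarrow> (nat \<Rightarrow> real)
    \<Rightarrow> (nat \<Rightarrow> nat \<Rightarrow> real) \<Rightarrow> (nat \<Rightarrow> nat \<Rightarrow> real) \<Rightarrow> nat \<Rightarrow> real" where
  "step_arg n r \<omega> x u b i = \<omega> i * xave n x
      + (1 - \<omega> i) / real (card (nbr n r x i))
        * ((\<Sum>l\<in>nbr n r x i. x l) + (\<Sum>l\<in>nbr n r x i - {i}. u l i + b l i))"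

lemma step_eq_proj01_step_arg:
  assumes "i < n" "0 \<le> r i"
  shows "step n r \<omega> x u b i = proj01 (step_arg n r \<omega> x u b i)"
proof -
  have "x i + (\<Sum>j \<in> nbr n r x i - {i}. x j + u j i + b j i)
     = (\<Sum>l\<in>nbr n r x i. x l) + (\<Sum>l \<in> nbr n r x i - {i}. u l i + b l i)"
    using self_in_nbr[of i n r x, OF assms] finite_nbr
    by (simp add: sum.remove[of "nbr n r x i" i] sum.distrib add.assoc)
  then show ?thesis
    unfolding step_def step_arg_def by simp
qed

lemma abs_step_arg_diff_le:
  assumes "0 < n" "k < n" "0 \<le> r k" "0 \<le> \<omega> k" "\<omega> k \<le> 1" "0 \<le> \<delta>"
    and "\<forall>l<n. \<bar>x l - y l\<bar> \<le> \<sigma>" "\<forall>l<n. l \<noteq> k \<longrightarrow> u l k = v" "\<forall>l<n. \<bar>b l k\<bar> \<le> \<delta>"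
  shows "\<bar>step_arg n r \<omega> x u b k - (\<omega> k * xave n y + (1 - \<omega> k) / real (card (nbr n r x k))
     * ((\<Sum>l\<in>nbr n r x k. y l) + (real (card (nbr n r x k)) - 1) * v))\<bar> \<le> \<sigma> + \<delta>"
proof -
  define N where "N = nbr n r x k"
  define c where "c = real (card N)"
  have N: "finite N" "k \<in> N" "N \<subseteq> {..<n}"
    unfolding N_def using finite_nbr self_in_nbr[of k n r x] nbr_subset assms(2,3) by auto
  then have c: "1 \<le> c" "real (card (N - {k})) = c - 1"
    unfolding c_def using card_gt_0_iff[of N] by (auto simp: of_nat_diff)
  have inputs: "(\<Sum>l\<in>N - {k}. u l k + b l k) = (c - 1) * v + (\<Sum>l\<in>N - {k}. b l k)"
    using N(3) assms(8) c(2) by (simp add: sum.distrib subset_eq)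
  define W where "W = ((\<Sum>l\<in>N. x l - y l) + (\<Sum>l\<in>N - {k}. b l k)) / c"
  have "step_arg n r \<omega> x u b k - (\<omega> k * xave n y + (1 - \<omega> k) / c * ((\<Sum>l\<in>N. y l) + (c - 1) * v))
      = \<omega> k * (xave n x - xave n y) + (1 - \<omega> k) * W"
    unfolding step_arg_def N_def[symmetric] c_def[symmetric] inputs W_def sum_subtractf
    using c(1) by (simp add: field_simps)
  moreover have "\<bar>xave n x - xave n y\<bar> \<le> \<sigma> + \<delta>"
    using abs_xave_diff_le[OF assms(1,7)] assms(6) by simp
  moreover have "\<bar>W\<bar> \<le> \<sigma> + \<delta>"
  proof -
    have "\<bar>\<Sum>l\<in>N. x l - y l\<bar> \<le> c * \<sigma>"
      unfolding c_def using sum_norm_bound[of N "\<lambda>l. x l - y l" \<sigma>] N(3) assms(7) by (auto simp: subset_eq)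
    moreover have "\<bar>\<Sum>l\<in>N - {k}. b l k\<bar> \<le> (c - 1) * \<delta>"
      using sum_norm_bound[of "N - {k}" "\<lambda>l. b l k" \<delta>] N(3) assms(9) c(2) by (auto simp: subset_eq)
    ultimately have "\<bar>(\<Sum>l\<in>N. x l - y l) + (\<Sum>l\<in>N - {k}. b l k)\<bar> \<le> c * (\<sigma> + \<delta>)"
      using abs_triangle_ineq[of "\<Sum>l\<in>N. x l - y l" "\<Sum>l\<in>N - {k}. b l k"] assms(6)
      by (simp add: algebra_simps)
    then show ?thesis
      unfolding W_def using c(1) by (simp add: pos_divide_le_eq abs_divide mult.commute)
  qed
  ultimately show ?thesis
    unfolding N_def c_def using abs_convex_comb_le assms(4,5) by metis
qed

lemma abs_step_diff_le:
  assumes "0 < n" "k < n" "0 \<le> r k" "0 \<le> \<omega> k" "\<omega> k \<le> 1" "0 \<le> \<delta>"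
    and "\<forall>l<n. \<bar>x l - y l\<bar> \<le> \<sigma>" "\<forall>l<n. l \<noteq> k \<longrightarrow> u l k = v" "\<forall>l<n. \<bar>b l k\<bar> \<le> \<delta>"
  shows "\<bar>step n r \<omega> x u b k - proj01 (\<omega> k * xave n y + (1 - \<omega> k) / real (card (nbr n r x k))
     * ((\<Sum>l\<in>nbr n r x k. y l) + (real (card (nbr n r x k)) - 1) * v))\<bar> \<le> \<sigma> + \<delta>"
  using abs_step_arg_diff_le[of n k r \<omega> \<delta> x y \<sigma> u v b, OF assms] step_eq_proj01_step_arg[of k n r \<omega> x u b, OF assms(2,3)]
    abs_proj01_diff_le order_trans by metis

lemma abs_step_diff_le_complete:
  assumes "0 < n" "k < n" "0 \<le> r k" "0 \<le> \<omega> k" "\<omega> k \<le> 1" "0 \<le> \<delta>" "0 < \<eta>"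
    and "\<forall>l<n. \<bar>x l - y l\<bar> \<le> \<sigma>" "\<forall>l<n. l \<noteq> k \<longrightarrow> u l k = v" "\<forall>l<n. \<bar>b l k\<bar> \<le> \<delta>"
    and "\<forall>l<n. \<bar>x l - x k\<bar> \<le> r k"
  shows "\<bar>step n r \<omega> x u b k - proj01 (xave n y + a_coef n \<omega> \<eta> k / \<eta> * v)\<bar> \<le> \<sigma> + \<delta>"
proof -
  have "(\<Sum>l<n. y l) = real n * xave n y"
    unfolding xave_def using assms(1) by simp
  then have "\<omega> k * xave n y + (1 - \<omega> k) / real n * ((\<Sum>l<n. y l) + (real n - 1) * v)
      = xave n y + a_coef n \<omega> \<eta> k / \<eta> * v"
    unfolding a_coef_def using assms(1,7) by (simp add: field_simps)
  then show ?thesis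
    using abs_step_diff_le[of n k r \<omega> \<delta> x y \<sigma> u v b, OF assms(1-6,8-10)] nbr_eq_lessThan[of n x k r, OF assms(11)] by simp
qed

lemma a_coef_pos: "1 < n \<Longrightarrow> \<omega> k < 1 \<Longrightarrow> 0 < \<eta> \<Longrightarrow> 0 < a_coef n \<omega> \<eta> k"
  unfolding a_coef_def by simp

text \<open>The common input that moves agent \<open>k\<close> by \<open>d\<close> when it sees all agents.\<close>

definition shift_input :: "nat \<Rightarrow> (nat \<Rightarrow> real) \<Rightarrow> real \<Rightarrow> real \<Rightarrow> nat \<Rightarrow> real" where
  "shift_input n \<omega> \<eta> d k = d * \<eta> / a_coef n \<omega> \<eta> k"

lemma abs_step_shift_input_le:
  assumes "1 < n" "k < n" "0 \<le> r k" "0 \<le> \<omega> k" "\<omega> k < 1" "0 \<le> \<delta>" "0 < \<eta>"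
    and "\<forall>l<n. l \<noteq> k \<longrightarrow> u l k = shift_input n \<omega> \<eta> d k" "\<forall>l<n. \<bar>b l k\<bar> \<le> \<delta>"
    and "\<forall>l<n. \<bar>x l - x k\<bar> \<le> r k"
  shows "\<bar>step n r \<omega> x u b k - proj01 (xave n x + d)\<bar> \<le> \<delta>"
proof -
  have "a_coef n \<omega> \<eta> k \<noteq> 0"
    using a_coef_pos[of n \<omega> k \<eta>] assms(1,5,7) by simp
  then have "a_coef n \<omega> \<eta> k / \<eta> * shift_input n \<omega> \<eta> d k = d"
    unfolding shift_input_def using assms(7) by simp
  then show ?thesis
    using abs_step_diff_le_complete[of n k r \<omega> \<delta> \<eta> x x 0 u "shift_input n \<omega> \<eta> d k" b] assms by simp
qed

lemma abs_step_uniform_input_le: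
  assumes "0 < n" "k < n" "0 \<le> r k" "0 \<le> \<omega> k" "\<omega> k \<le> 1" "0 \<le> \<delta>" "0 < \<eta>"
    and "\<forall>l<n. \<bar>x l - z\<bar> \<le> \<sigma>" "\<forall>l<n. l \<noteq> k \<longrightarrow> u l k = \<tau> * \<eta>" "\<forall>l<n. \<bar>b l k\<bar> \<le> \<delta>"
    and "\<forall>l<n. \<bar>x l - x k\<bar> \<le> r k"
  shows "\<bar>step n r \<omega> x u b k - proj01 (z + \<tau> * a_coef n \<omega> \<eta> k)\<bar> \<le> \<sigma> + \<delta>"
  using abs_step_diff_le_complete[of n k r \<omega> \<delta> \<eta> x "\<lambda>_. z" \<sigma> u "\<tau> * \<eta>" b] assms
  by (simp add: xave_const mult.commute)

section \<open>Contraction under zero input\<close>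

definition spread :: "nat \<Rightarrow> (nat \<Rightarrow> real) \<Rightarrow> real \<Rightarrow> bool" where
  "spread n x D \<longleftrightarrow> (\<forall>i<n. \<forall>j<n. \<bar>x i - x j\<bar> \<le> D)"

lemma spread_mono: "spread n x D \<Longrightarrow> D \<le> D' \<Longrightarrow> spread n x D'"
  unfolding spread_def by force

lemma spread_if_in_cube:
  assumes "in_cube n x"
  shows "spread n x 1"
  unfolding spread_def
proof (intro allI impI)
  fix i j assume "i < n" "j < n"
  then have "0 \<le> x i" "x i \<le> 1" "0 \<le> x j" "x j \<le> 1"
    using assms unfolding in_cube_def by auto
  then show "\<bar>x i - x j\<bar> \<le> 1"
    by (simp add: abs_le_iff)
qed

lemma spread_if_near:
  assumes "\<forall>l<n. \<bar>x l - c\<bar> \<le> \<delta>"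
  shows "spread n x (2 * \<delta>)"
  unfolding spread_def
proof (intro allI impI)
  fix i j assume "i < n" "j < n"
  then have "\<bar>x i - c\<bar> \<le> \<delta>" "\<bar>x j - c\<bar> \<le> \<delta>"
    using assms by auto
  then show "\<bar>x i - x j\<bar> \<le> 2 * \<delta>"
    by (simp add: abs_le_iff)
qed

lemma step_zero_input_bounds:
  assumes "0 < n" "k < n" "0 \<le> r k" "0 \<le> wm" "wm \<le> \<omega> k" "\<omega> k \<le> 1" "0 \<le> \<delta>"
    and "\<forall>l<n. m \<le> x l \<and> x l \<le> M" "\<forall>l<n. \<bar>b l k\<bar> \<le> \<delta>"
  shows "step n r \<omega> x (\<lambda>_ _. 0) b k \<le> proj01 (M - wm * (M - xave n x) + \<delta>)"
    and "proj01 (m + wm * (xave n x - m) - \<delta>) \<le> step n r \<omega> x (\<lambda>_ _. 0) b k"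
proof -
  define N where "N = nbr n r x k"
  define \<mu> where "\<mu> = (\<Sum>l\<in>N. x l) / real (card N)"
  have N: "finite N" "N \<noteq> {}" "N \<subseteq> {..<n}"
    unfolding N_def using finite_nbr self_in_nbr[of k n r x] nbr_subset assms(2,3) by auto
  have \<mu>: "m \<le> \<mu>" "\<mu> \<le> M"
    unfolding \<mu>_def using mean_between[of N m x M] N assms(8) by auto
  have ave: "m \<le> xave n x" "xave n x \<le> M"
    using xave_between[OF assms(1,8)] by auto
  have "\<bar>step_arg n r \<omega> x (\<lambda>_ _. 0) b k - (\<omega> k * xave n x + (1 - \<omega> k) * \<mu>)\<bar> \<le> \<delta>"
    using abs_step_arg_diff_le[of n k r \<omega> \<delta> x x 0 "\<lambda>_ _. 0" 0 b] assms
    unfolding \<mu>_def N_def by simp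
  moreover have "M - wm * (M - xave n x) - (\<omega> k * xave n x + (1 - \<omega> k) * \<mu>)
      = (\<omega> k - wm) * (M - xave n x) + (1 - \<omega> k) * (M - \<mu>)"
    and "\<omega> k * xave n x + (1 - \<omega> k) * \<mu> - (m + wm * (xave n x - m))
      = (\<omega> k - wm) * (xave n x - m) + (1 - \<omega> k) * (\<mu> - m)"
    by (simp_all add: algebra_simps)
  moreover have "0 \<le> (\<omega> k - wm) * (M - xave n x) + (1 - \<omega> k) * (M - \<mu>)"
    and "0 \<le> (\<omega> k - wm) * (xave n x - m) + (1 - \<omega> k) * (\<mu> - m)"
    using \<mu> ave assms(5,6) by simp_all
  ultimately have "step_arg n r \<omega> x (\<lambda>_ _. 0) b k \<le> M - wm * (M - xave n x) + \<delta>"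
    and "m + wm * (xave n x - m) - \<delta> \<le> step_arg n r \<omega> x (\<lambda>_ _. 0) b k"
    by (simp_all add: abs_le_iff)
  then show "step n r \<omega> x (\<lambda>_ _. 0) b k \<le> proj01 (M - wm * (M - xave n x) + \<delta>)"
    and "proj01 (m + wm * (xave n x - m) - \<delta>) \<le> step n r \<omega> x (\<lambda>_ _. 0) b k"
    using step_eq_proj01_step_arg[of k n r \<omega> x "\<lambda>_ _. 0" b] assms(2,3) proj01_mono by simp_all
qed

lemma spread_step_zero_input:
  assumes "0 < n" "\<forall>k<n. 0 \<le> r k" "0 \<le> wm" "\<forall>k<n. wm \<le> \<omega> k \<and> \<omega> k \<le> 1" "0 \<le> \<delta>"
    and "spread n x D" "\<forall>l<n. \<forall>k<n. \<bar>b l k\<bar> \<le> \<delta>"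
  shows "spread n (step n r \<omega> x (\<lambda>_ _. 0) b) ((1 - wm) * D + 2 * \<delta>)"
proof -
  define M where "M = Max (x ` {..<n})"
  define m where "m = Min (x ` {..<n})"
  have "M \<in> x ` {..<n}" "m \<in> x ` {..<n}"
    unfolding M_def m_def using assms(1) by (auto intro!: Max_in Min_in)
  then have "M - m \<le> D"
    using assms(6) unfolding spread_def by (auto dest: abs_le_D1)
  have bounds: "\<forall>l<n. m \<le> x l \<and> x l \<le> M"
    unfolding M_def m_def by auto
  have "wm \<le> 1"
    using assms(1,4) by auto
  define A where "A = M - wm * (M - xave n x) + \<delta>"
  define B where "B = m + wm * (xave n x - m) - \<delta>"
  have between: "\<forall>k<n. step n r \<omega> x (\<lambda>_ _. 0) b k \<le> proj01 A \<and> proj01 B \<le> step n r \<omega> x (\<lambda>_ _. 0) b k"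
    unfolding A_def B_def using step_zero_input_bounds[OF assms(1) _ _ assms(3) _ _ assms(5) bounds]
      assms(2,4,7) by auto
  have width: "proj01 A - proj01 B \<le> (1 - wm) * D + 2 * \<delta>"
  proof -
    have "A - B = (1 - wm) * (M - m) + 2 * \<delta>"
      unfolding A_def B_def by (simp add: algebra_simps)
    moreover have "(1 - wm) * (M - m) \<le> (1 - wm) * D"
      using \<open>M - m \<le> D\<close> \<open>wm \<le> 1\<close> by (simp add: mult_left_mono)
    moreover have "0 \<le> (1 - wm) * (M - m)"
      using bounds[rule_format, OF assms(1)] \<open>wm \<le> 1\<close> by simp
    ultimately have "0 \<le> A - B" "A - B \<le> (1 - wm) * D + 2 * \<delta>"
      using assms(5) by linarith+
    then show ?thesis
      using abs_proj01_diff_le[of A B] abs_of_nonneg[of "A - B"] by linarith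
  qed
  show ?thesis
    unfolding spread_def
  proof (intro allI impI)
    fix i j assume "i < n" "j < n"
    then have "step n r \<omega> x (\<lambda>_ _. 0) b i \<le> proj01 A" "proj01 B \<le> step n r \<omega> x (\<lambda>_ _. 0) b i"
      "step n r \<omega> x (\<lambda>_ _. 0) b j \<le> proj01 A" "proj01 B \<le> step n r \<omega> x (\<lambda>_ _. 0) b j"
      using between by auto
    then show "\<bar>step n r \<omega> x (\<lambda>_ _. 0) b i - step n r \<omega> x (\<lambda>_ _. 0) b j\<bar> \<le> (1 - wm) * D + 2 * \<delta>"
      using width by (simp add: abs_le_iff)
  qed
qed

lemma spread_zero_input_phase:
  assumes "0 < n" "\<forall>k<n. 0 \<le> r k" "0 \<le> wm" "\<forall>k<n. wm \<le> \<omega> k \<and> \<omega> k \<le> 1" "0 \<le> \<delta>"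
    and "in_cube n (X 0)" "\<forall>t<K. X (Suc t) = step n r \<omega> (X t) (\<lambda>_ _. 0) (B t)"
    and "\<forall>t. \<forall>l<n. \<forall>k<n. \<bar>B t l k\<bar> \<le> \<delta>"
  shows "spread n (X K) ((1 - wm) ^ K + 2 * real K * \<delta>)"
proof -
  have "wm \<le> 1"
    using assms(1,4) by auto
  have "spread n (X t) ((1 - wm) ^ t + 2 * real t * \<delta>)" if "t \<le> K" for t
    using that
  proof (induction t)
    case 0
    then show ?case
      using spread_if_in_cube[OF assms(6)] by simp
  next
    case (Suc t)
    have "spread n (X (Suc t)) ((1 - wm) * ((1 - wm) ^ t + 2 * real t * \<delta>) + 2 * \<delta>)"
      using spread_step_zero_input[OF assms(1-5)] Suc assms(7,8) by simp
    moreover have "(1 - wm) * (2 * real t * \<delta>) \<le> 2 * real t * \<delta>"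
      using \<open>wm \<le> 1\<close> assms(3,5) by (simp add: mult_left_le_one_le)
    ultimately show ?case
      using spread_mono by (fastforce simp: algebra_simps)
  qed
  then show ?thesis
    by simp
qed

section \<open>Steering the consensus\<close>

definition clamp :: "real \<Rightarrow> real \<Rightarrow> real" where
  "clamp d y = max (- d) (min d y)"

lemma clamp_step_between: "0 \<le> d \<Longrightarrow> min m z \<le> m + clamp d (z - m) \<and> m + clamp d (z - m) \<le> max m z"
  unfolding clamp_def by (auto simp: min_def max_def)

lemma dist_clamp_step: "0 \<le> d \<Longrightarrow> \<bar>m + clamp d (z - m) - z\<bar> = max 0 (\<bar>m - z\<bar> - d)"
  unfolding clamp_def by (auto simp: min_def max_def abs_if)

lemma dist_steered_mean:
  fixes m m' z dm \<delta> s :: real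
  assumes "\<bar>m' - (m + clamp dm (z - m))\<bar> \<le> \<delta>" "\<bar>m - z\<bar> \<le> max dm (1 - s)" "0 \<le> \<delta>" "2 * \<delta> \<le> dm"
  shows "\<bar>m' - z\<bar> \<le> max dm (1 - s - dm / 2)"
proof -
  have "\<bar>m' - z\<bar> \<le> \<delta> + max 0 (\<bar>m - z\<bar> - dm)"
    using abs_triangle_ineq[of "m' - (m + clamp dm (z - m))" "m + clamp dm (z - m) - z"]
      dist_clamp_step[of dm m z] assms(1,3,4) by simp
  then show ?thesis
    using assms(2-4) unfolding max_def by (auto simp: field_simps split: if_split_asm)
qed

lemma steering_step:
  assumes "1 < n" "\<forall>k<n. 0 \<le> r k" "\<forall>k<n. 0 \<le> \<omega> k \<and> \<omega> k < 1" "0 < \<eta>" "0 \<le> \<delta>" "0 \<le> dm"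
    and "0 \<le> z" "z \<le> 1" "in_cube n x" "\<forall>k<n. \<forall>l<n. \<bar>x l - x k\<bar> \<le> r k"
    and "\<forall>l<n. \<forall>k<n. \<bar>b l k\<bar> \<le> \<delta>"
  shows "\<forall>k<n. \<bar>step n r \<omega> x (\<lambda>l k. shift_input n \<omega> \<eta> (clamp dm (z - xave n x)) k) b k
    - (xave n x + clamp dm (z - xave n x))\<bar> \<le> \<delta>"
proof (intro allI impI)
  fix k assume "k < n"
  have "0 \<le> xave n x" "xave n x \<le> 1"
    using xave_between[of n 0 x 1] assms(1,9) unfolding in_cube_def by auto
  then have "proj01 (xave n x + clamp dm (z - xave n x)) = xave n x + clamp dm (z - xave n x)"
    using clamp_step_between[OF assms(6), of "xave n x" z] assms(7,8) by (intro proj01_eq_self) auto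
  then show "\<bar>step n r \<omega> x (\<lambda>l k. shift_input n \<omega> \<eta> (clamp dm (z - xave n x)) k) b k
    - (xave n x + clamp dm (z - xave n x))\<bar> \<le> \<delta>"
    using abs_step_shift_input_le[of n k r \<omega> \<delta> \<eta> "\<lambda>l k. shift_input n \<omega> \<eta> (clamp dm (z - xave n x)) k"
        "clamp dm (z - xave n x)" b x] assms \<open>k < n\<close> by simp
qed

lemma steering_phase:
  assumes "1 < n" "\<forall>k<n. 0 \<le> \<omega> k \<and> \<omega> k < 1" "0 < \<eta>" "0 \<le> \<delta>" "2 * \<delta> \<le> dm"
    and "0 \<le> z" "z \<le> 1" "\<forall>k<n. \<rho> \<le> r k" "2 * \<delta> \<le> \<rho>" "1 < real N * dm / 2"
    and "\<forall>t. in_cube n (X t)" "spread n (X 0) \<rho>"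
    and "\<forall>t<N. X (Suc t) = step n r \<omega> (X t)
           (\<lambda>l k. shift_input n \<omega> \<eta> (clamp dm (z - xave n (X t))) k) (B t)"
    and "\<forall>t. \<forall>l<n. \<forall>k<n. \<bar>B t l k\<bar> \<le> \<delta>"
  shows "\<forall>l<n. \<bar>X N l - z\<bar> \<le> \<delta>"
proof -
  define c where "c t = xave n (X t) + clamp dm (z - xave n (X t))" for t
  have "0 \<le> dm" "\<forall>k<n. 0 \<le> r k"
    using assms(4,5,8,9) by auto
  have next_near: "\<forall>l<n. \<bar>X (Suc t) l - c t\<bar> \<le> \<delta>" if "t < N" "spread n (X t) \<rho>" for t
  proof -
    have "\<forall>k<n. \<forall>l<n. \<bar>X t l - X t k\<bar> \<le> r k"
      using that(2) assms(8) unfolding spread_def by (meson order_trans)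
    then show ?thesis
      unfolding c_def using steering_step[OF assms(1) \<open>\<forall>k<n. 0 \<le> r k\<close> assms(2-4) \<open>0 \<le> dm\<close> assms(6,7)]
        assms(11,13,14) that(1) by simp
  qed
  have invariant: "spread n (X t) \<rho> \<and> \<bar>xave n (X t) - z\<bar> \<le> max dm (1 - real t * dm / 2)"
    if "t < N" for t
    using that
  proof (induction t)
    case 0
    have "0 \<le> xave n (X 0)" "xave n (X 0) \<le> 1"
      using xave_between[of n 0 "X 0" 1] assms(1,11) unfolding in_cube_def by auto
    then have "\<bar>xave n (X 0) - z\<bar> \<le> 1"
      using assms(6,7) by (simp add: abs_le_iff)
    then show ?case
      using assms(12) by (simp add: le_max_iff_disj)
  next
    case (Suc t)
    then have near: "\<forall>l<n. \<bar>X (Suc t) l - c t\<bar> \<le> \<delta>"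
      using next_near by simp
    then have "\<bar>xave n (X (Suc t)) - c t\<bar> \<le> \<delta>"
      using abs_xave_diff_le[of n "X (Suc t)" "\<lambda>_. c t" \<delta>] assms(1) by (simp add: xave_const)
    moreover have "\<bar>xave n (X t) - z\<bar> \<le> max dm (1 - real t * dm / 2)"
      using Suc by simp
    ultimately have "\<bar>xave n (X (Suc t)) - z\<bar> \<le> max dm (1 - real t * dm / 2 - dm / 2)"
      using dist_steered_mean[OF _ _ assms(4,5)] unfolding c_def by blast
    moreover have "1 - real t * dm / 2 - dm / 2 = 1 - real (Suc t) * dm / 2"
      by (simp add: field_simps)
    ultimately have "\<bar>xave n (X (Suc t)) - z\<bar> \<le> max dm (1 - real (Suc t) * dm / 2)"
      by simp
    moreover have "spread n (X (Suc t)) \<rho>"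
      using spread_if_near[OF near] assms(9) spread_mono by blast
    ultimately show ?case
      by simp
  qed
  obtain t where t: "N = Suc t"
    using assms(10) by (cases N) auto
  then have "\<bar>xave n (X t) - z\<bar> \<le> dm"
    using invariant[of t] assms(10) \<open>0 \<le> dm\<close> by (auto simp: max_def field_simps split: if_split_asm)
  then have "c t = z"
    unfolding c_def using dist_clamp_step[OF \<open>0 \<le> dm\<close>, of "xave n (X t)" z] by simp
  then show ?thesis
    using next_near[of t] invariant[of t] t by simp
qed

section \<open>Splitting a pair of agents\<close>

lemma sum_two_point:
  assumes "i < n" "j < n" "i \<noteq> j"
  shows "(\<Sum>l<n. z + (if l = i then p else if l = j then q else 0)) = real n * z + p + (q::real)"
proof -
  have "(\<Sum>l<n. z + (if l = i then p else if l = j then q else 0))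
      = (\<Sum>l<n. z + ((if l = i then p else 0) + (if l = j then q else 0)))"
    using assms(3) by (intro sum.cong) auto
  also have "\<dots> = real n * z + p + q"
    using assms(1,2) by (simp add: sum.distrib)
  finally show ?thesis .
qed

lemma dist_two_point:
  fixes x :: "nat \<Rightarrow> real"
  assumes "i < n" "l < n" "l \<noteq> i"
    and "\<forall>l<n. \<bar>x l - (z + (if l = i then p else if l = j then q else 0))\<bar> \<le> \<sigma>"
  shows "\<bar>\<bar>x l - x i\<bar> - (if l = j then \<bar>p - q\<bar> else \<bar>p\<bar>)\<bar> \<le> 2 * \<sigma>"
proof -
  define e where "e = (if l = j then q else 0)"
  have "\<bar>x l - (z + e)\<bar> \<le> \<sigma>" "\<bar>x i - (z + p)\<bar> \<le> \<sigma>"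
    unfolding e_def using assms by auto
  then have "\<bar>(x l - x i) - (e - p)\<bar> \<le> 2 * \<sigma>"
    by (simp add: abs_le_iff)
  moreover have "(if l = j then \<bar>p - q\<bar> else \<bar>p\<bar>) = \<bar>e - p\<bar>"
    unfolding e_def by (simp add: abs_minus_commute)
  ultimately show ?thesis
    using abs_triangle_ineq3[of "x l - x i" "e - p"] by linarith
qed

lemma nbr_two_point:
  assumes "i < n" "j < n" "i \<noteq> j" "0 \<le> r i"
    and "\<forall>l<n. \<bar>x l - (z + (if l = i then p else if l = j then q else 0))\<bar> \<le> \<sigma>"
  shows "r i < \<bar>p\<bar> - 2 * \<sigma> \<Longrightarrow> r i < \<bar>p - q\<bar> - 2 * \<sigma> \<Longrightarrow> nbr n r x i = {i}"
    and "\<bar>p\<bar> + 2 * \<sigma> \<le> r i \<Longrightarrow> r i < \<bar>p - q\<bar> - 2 * \<sigma> \<Longrightarrow> nbr n r x i = {..<n} - {j}"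
    and "\<bar>p\<bar> + 2 * \<sigma> \<le> r i \<Longrightarrow> \<bar>p - q\<bar> + 2 * \<sigma> \<le> r i \<Longrightarrow> nbr n r x i = {..<n}"
proof -
  define d where "d l = (if l = j then \<bar>p - q\<bar> else \<bar>p\<bar>)" for l
  note dist = dist_two_point[OF assms(1) _ _ assms(5), folded d_def]
  have inside: "l \<in> nbr n r x i" if "l < n" "d l + 2 * \<sigma> \<le> r i" for l
    using dist[of l] that assms(4) unfolding nbr_def by (cases "l = i") (auto simp: abs_le_iff)
  have outside: "l \<notin> nbr n r x i" if "l \<noteq> i" "r i < d l - 2 * \<sigma>" for l
    using dist[of l] that unfolding nbr_def by (auto simp: abs_le_iff)
  have self: "i \<in> nbr n r x i"
    using self_in_nbr[of i n r x] assms(1,4) .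
  show "nbr n r x i = {i}" if "r i < \<bar>p\<bar> - 2 * \<sigma>" "r i < \<bar>p - q\<bar> - 2 * \<sigma>"
  proof -
    have "l \<notin> nbr n r x i" if "l \<noteq> i" for l
      using outside[OF that] \<open>r i < \<bar>p\<bar> - 2 * \<sigma>\<close> \<open>r i < \<bar>p - q\<bar> - 2 * \<sigma>\<close> unfolding d_def by simp
    then show ?thesis
      using self by blast
  qed
  show "nbr n r x i = {..<n} - {j}" if "\<bar>p\<bar> + 2 * \<sigma> \<le> r i" "r i < \<bar>p - q\<bar> - 2 * \<sigma>"
  proof -
    have "l \<in> nbr n r x i" if "l < n" "l \<noteq> j" for l
      using inside[OF that(1)] \<open>\<bar>p\<bar> + 2 * \<sigma> \<le> r i\<close> that(2) unfolding d_def by simp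
    moreover have "j \<notin> nbr n r x i"
      using outside[of j] assms(3) \<open>r i < \<bar>p - q\<bar> - 2 * \<sigma>\<close> unfolding d_def by simp
    ultimately show ?thesis
      using nbr_subset[of n r x i] by blast
  qed
  show "nbr n r x i = {..<n}" if "\<bar>p\<bar> + 2 * \<sigma> \<le> r i" "\<bar>p - q\<bar> + 2 * \<sigma> \<le> r i"
  proof -
    have "l \<in> nbr n r x i" if "l < n" for l
      using inside[OF that] \<open>\<bar>p\<bar> + 2 * \<sigma> \<le> r i\<close> \<open>\<bar>p - q\<bar> + 2 * \<sigma> \<le> r i\<close> unfolding d_def by simp
    then show ?thesis
      using nbr_subset[of n r x i] by blast
  qed
qed

text \<open>After the first split step the agents are within \<open>\<sigma>\<close> of \<open>z + \<tau> a\<^sub>i\<close> (agent \<open>i\<close>),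
  \<open>z - \<tau> a\<^sub>j\<close> (agent \<open>j\<close>) and \<open>z\<close> (all others). The margin condition says that the scaled and
  perturbed distances \<open>\<tau> a\<^sub>i\<close> and \<open>\<tau> (a\<^sub>i + a\<^sub>j)\<close> lie strictly on the same side of \<open>r\<^sub>i\<close> as \<open>a\<^sub>i\<close> and
  \<open>a\<^sub>i + a\<^sub>j\<close>, so that agent \<open>i\<close> has the neighbour set assumed by the case of \<open>h_coef\<close>.\<close>

definition nbr_margin :: "nat \<Rightarrow> (nat \<Rightarrow> real) \<Rightarrow> (nat \<Rightarrow> real) \<Rightarrow> real \<Rightarrow> nat \<Rightarrow> nat \<Rightarrow> real \<Rightarrow> real \<Rightarrow> bool" where
  "nbr_margin n r \<omega> \<eta> i j \<tau> \<sigma> \<longleftrightarrow>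
     (if r i < a_coef n \<omega> \<eta> i then r i < \<tau> * a_coef n \<omega> \<eta> i - 2 * \<sigma>
      else if r i < a_coef n \<omega> \<eta> i + a_coef n \<omega> \<eta> j then
        \<tau> * a_coef n \<omega> \<eta> i + 2 * \<sigma> \<le> r i \<and> r i < \<tau> * (a_coef n \<omega> \<eta> i + a_coef n \<omega> \<eta> j) - 2 * \<sigma>
      else \<tau> * (a_coef n \<omega> \<eta> i + a_coef n \<omega> \<eta> j) + 2 * \<sigma> \<le> r i)"

text \<open>\<open>h_coef n r \<omega> \<eta> i j\<close> is the displacement of agent \<open>i\<close> per unit \<open>\<tau>\<close> in the second split step,
  for the three possible neighbour sets \<open>{i}\<close>, all agents but \<open>j\<close>, and all agents.\<close>

lemma h_coef_eq_noiseless_step: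
  fixes n i j :: nat and r \<omega> :: "nat \<Rightarrow> real" and \<eta> z t :: real
  defines "A \<equiv> a_coef n \<omega> \<eta> i" and "A' \<equiv> a_coef n \<omega> \<eta> j"
    and "m \<equiv> z + (t * a_coef n \<omega> \<eta> i - t * a_coef n \<omega> \<eta> j) / real n"
  assumes "2 \<le> n"
  shows "r i < A \<Longrightarrow> \<omega> i * m + (1 - \<omega> i) * (z + t * A) = z + t * h_coef n r \<omega> \<eta> i j"
    and "A \<le> r i \<Longrightarrow> r i < A + A' \<Longrightarrow> \<omega> i * m + (1 - \<omega> i) / (real n - 1)
           * ((real n - 1) * z + t * A + (real n - 1 - 1) * (t * \<eta>)) = z + t * h_coef n r \<omega> \<eta> i j"
    and "A + A' \<le> r i \<Longrightarrow> 0 \<le> A' \<Longrightarrow> \<omega> i * m + (1 - \<omega> i) / real n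
           * (real n * z + t * A - t * A' + (real n - 1) * (t * \<eta>)) = z + t * h_coef n r \<omega> \<eta> i j"
proof -
  have n: "real n \<noteq> 0" "real n - 1 \<noteq> 0"
    using assms(4) by auto
  show "\<omega> i * m + (1 - \<omega> i) * (z + t * A) = z + t * h_coef n r \<omega> \<eta> i j" if "r i < A"
    using that n unfolding m_def h_coef_def A_def A'_def a_coef_def
    by (simp add: field_simps power2_eq_square)
  show "\<omega> i * m + (1 - \<omega> i) / (real n - 1) * ((real n - 1) * z + t * A + (real n - 1 - 1) * (t * \<eta>))
      = z + t * h_coef n r \<omega> \<eta> i j" if "A \<le> r i" "r i < A + A'"
    using that n unfolding m_def h_coef_def A_def A'_def a_coef_def
    by (simp add: field_simps power2_eq_square)
  assume "A + A' \<le> r i" "0 \<le> A'"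
  then have h: "h_coef n r \<omega> \<eta> i j = (real n - 1) * \<eta> / real n * (1 - \<omega> i + (\<omega> j - \<omega> i) / real n)"
    unfolding h_coef_def A_def A'_def by auto
  show "\<omega> i * m + (1 - \<omega> i) / real n * (real n * z + t * A - t * A' + (real n - 1) * (t * \<eta>))
      = z + t * h_coef n r \<omega> \<eta> i j"
    using n unfolding h m_def A_def A'_def a_coef_def by (simp add: field_simps)
qed

lemma step_split_second:
  assumes "3 \<le> n" "i < n" "j < n" "i \<noteq> j" "0 \<le> r i" "0 \<le> \<omega> i" "\<omega> i \<le> 1" "0 \<le> \<delta>"
    and "0 \<le> a_coef n \<omega> \<eta> i" "0 \<le> a_coef n \<omega> \<eta> j" "nbr_margin n r \<omega> \<eta> i j \<bar>t\<bar> \<sigma>"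
    and "\<forall>l<n. \<bar>x l - (z + (if l = i then t * a_coef n \<omega> \<eta> i
                          else if l = j then - (t * a_coef n \<omega> \<eta> j) else 0))\<bar> \<le> \<sigma>"
    and "\<forall>l<n. l \<noteq> i \<longrightarrow> u l i = t * \<eta>" "\<forall>l<n. \<bar>b l i\<bar> \<le> \<delta>"
  shows "\<bar>step n r \<omega> x u b i - proj01 (z + t * h_coef n r \<omega> \<eta> i j)\<bar> \<le> \<sigma> + \<delta>"
proof -
  define A where "A = a_coef n \<omega> \<eta> i"
  define A' where "A' = a_coef n \<omega> \<eta> j"
  define y where "y l = z + (if l = i then t * A else if l = j then - (t * A') else 0)" for l
  have "2 \<le> n"
    using assms(1) by simp
  note h = h_coef_eq_noiseless_step[where n = n and i = i and j = j and r = r and \<omega> = \<omega> and \<eta> = \<eta>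
      and z = z and t = t, OF this, folded A_def A'_def]
  have sum_y: "(\<Sum>l<n. y l) = real n * z + t * A - t * A'"
    unfolding y_def using sum_two_point[OF assms(2-4)] by simp
  then have ave_y: "xave n y = z + (t * A - t * A') / real n"
    unfolding xave_def using assms(1) by (simp add: field_simps)
  have close: "\<bar>step n r \<omega> x u b i - proj01 (\<omega> i * xave n y + (1 - \<omega> i) / real (card (nbr n r x i))
     * ((\<Sum>l\<in>nbr n r x i. y l) + (real (card (nbr n r x i)) - 1) * (t * \<eta>)))\<bar> \<le> \<sigma> + \<delta>"
    using abs_step_diff_le[of n i r \<omega> \<delta> x y \<sigma> u "t * \<eta>" b] assms unfolding y_def A_def A'_def by simp
  have "\<bar>t * A\<bar> = \<bar>t\<bar> * A" "\<bar>t * A - - (t * A')\<bar> = \<bar>t\<bar> * (A + A')"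
    using assms(9,10) unfolding A_def A'_def by (simp_all add: abs_mult distrib_left[symmetric])
  note nbr = nbr_two_point[of i n j r x z "t * A" "- (t * A')" \<sigma>, OF assms(2-5), unfolded this]
  have config: "\<forall>l<n. \<bar>x l - (z + (if l = i then t * A else if l = j then - (t * A') else 0))\<bar> \<le> \<sigma>"
    using assms(12) unfolding A_def A'_def .
  have margin: "\<bar>t\<bar> * A \<le> \<bar>t\<bar> * (A + A')" "nbr_margin n r \<omega> \<eta> i j \<bar>t\<bar> \<sigma>"
    using assms(10,11) unfolding A'_def by (simp_all add: mult_left_mono)
  consider (isolated) "r i < A" | (partial) "A \<le> r i" "r i < A + A'" | (full) "A + A' \<le> r i"
    by linarith
  then show ?thesis
  proof cases
    case isolated
    then have "nbr n r x i = {i}"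
      using nbr(1)[OF config] margin unfolding nbr_margin_def A_def A'_def by simp
    then show ?thesis
      using close h(1)[OF isolated] assms(1) unfolding ave_y y_def by simp
  next
    case partial
    then have "nbr n r x i = {..<n} - {j}"
      using nbr(2)[OF config] margin unfolding nbr_margin_def A_def A'_def by simp
    moreover have "(\<Sum>l\<in>{..<n} - {j}. y l) = (real n - 1) * z + t * A"
      using sum_y assms(3,4) unfolding y_def by (simp add: sum_diff1 algebra_simps)
    ultimately show ?thesis
      using close h(2)[OF partial] assms(1,3) unfolding ave_y by simp
  next
    case full
    then have "nbr n r x i = {..<n}"
      using nbr(3)[OF config] assms(10) margin unfolding nbr_margin_def A_def A'_def by (auto split: if_splits)
    then show ?thesis
      using close h(3)[OF full] assms(1,10) sum_y unfolding ave_y A'_def by simp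
  qed
qed

text \<open>The target of the steering phase. If \<open>a\<^sub>I + a\<^sub>J > 1\<close> the first split step already reaches both
  ends of \<open>[0,1]\<close>; otherwise the second step is started from a point at which the projection onto
  \<open>[0,1]\<close> costs exactly the penalty terms of \<open>c_coef\<close> (lemma \<open>split_point_gap\<close>).\<close>

definition split_point :: "real \<Rightarrow> real \<Rightarrow> real \<Rightarrow> real \<Rightarrow> real" where
  "split_point aI aJ hI hJ =
    (if 1 < aI + aJ then aJ / (aI + aJ)
     else if hJ \<le> aJ then aJ else if hI \<le> aI then 1 - aI else min hJ (1 - aI))"

lemma split_point_between:
  "aI + aJ \<le> 1 \<Longrightarrow> aJ \<le> split_point aI aJ hI hJ \<and> split_point aI aJ hI hJ \<le> 1 - aI"
  unfolding split_point_def by auto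

lemma split_point_in_unit:
  "0 < aI \<Longrightarrow> 0 < aJ \<Longrightarrow> 0 \<le> split_point aI aJ hI hJ \<and> split_point aI aJ hI hJ \<le> 1"
  unfolding split_point_def by (auto simp: divide_le_eq)

lemma split_point_saturates:
  assumes "0 < aI" "0 < aJ" "1 < aI + aJ" "1 \<le> \<theta> * (aI + aJ)"
  shows "1 \<le> split_point aI aJ hI hJ + \<theta> * aI" "split_point aI aJ hI hJ - \<theta> * aJ \<le> 0"
proof -
  have "aI * 1 \<le> aI * (\<theta> * (aI + aJ))" "aJ * 1 \<le> aJ * (\<theta> * (aI + aJ))"
    using assms by (intro mult_left_mono; simp)+
  then have "aI / (aI + aJ) \<le> \<theta> * aI" "aJ / (aI + aJ) \<le> \<theta> * aJ"
    using assms(1,2) by (simp_all add: divide_le_eq algebra_simps)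
  moreover have "aJ / (aI + aJ) = 1 - aI / (aI + aJ)"
    using assms(1,2) by (simp add: field_simps)
  ultimately show "1 \<le> split_point aI aJ hI hJ + \<theta> * aI" "split_point aI aJ hI hJ - \<theta> * aJ \<le> 0"
    unfolding split_point_def using assms(3) by auto
qed

lemma split_point_gap:
  assumes "aI + aJ \<le> 1" "c \<le> hI + hJ"
    and "c \<le> 1 - (aI - hI) * (if aI > hI then 1 else 0) - (aJ - hJ) * (if aJ > hJ then 1 else 0)"
  shows "c \<le> aI + aJ \<or> c \<le> min 1 (split_point aI aJ hI hJ + hI) - max 0 (split_point aI aJ hI hJ - hJ)"
  using assms unfolding split_point_def by (auto simp: min_def max_def split: if_splits)

lemma separation_gap_perturbed:
  fixes c aI aJ hI hJ z \<theta> \<delta> e x1I x1J x2I x2J :: real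
  assumes "c \<le> aI + aJ \<or> c \<le> min 1 (z + hI) - max 0 (z - hJ)" "\<theta> \<le> 1" "0 \<le> \<delta>"
    and "(1 - \<theta>) * (aI + aJ) \<le> e" "(1 - \<theta>) * (\<bar>hI\<bar> + \<bar>hJ\<bar>) \<le> e"
    and "z + \<theta> * aI - 2 * \<delta> \<le> x1I" "x1J \<le> z - \<theta> * aJ + 2 * \<delta>"
    and "min 1 (z + \<theta> * hI) - 3 * \<delta> \<le> x2I" "x2J \<le> max 0 (z - \<theta> * hJ) + 3 * \<delta>"
  shows "c - (e + 6 * \<delta>) \<le> x1I - x1J \<or> c - (e + 6 * \<delta>) \<le> x2I - x2J"
proof -
  have "(1 - \<theta>) * hI \<le> (1 - \<theta>) * \<bar>hI\<bar>" "(1 - \<theta>) * - hJ \<le> (1 - \<theta>) * \<bar>hJ\<bar>"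
    and "0 \<le> (1 - \<theta>) * \<bar>hI\<bar>" "0 \<le> (1 - \<theta>) * \<bar>hJ\<bar>"
    using assms(2) by (intro mult_left_mono mult_nonneg_nonneg; simp)+
  moreover have "\<theta> * hI = hI - (1 - \<theta>) * hI" "\<theta> * hJ = hJ + (1 - \<theta>) * - hJ"
    by (simp_all add: algebra_simps)
  ultimately have min_max: "min 1 (z + hI) - (1 - \<theta>) * \<bar>hI\<bar> \<le> min 1 (z + \<theta> * hI)"
      "max 0 (z - \<theta> * hJ) \<le> max 0 (z - hJ) + (1 - \<theta>) * \<bar>hJ\<bar>"
    unfolding min_def max_def by auto
  have eqs: "\<theta> * aI + \<theta> * aJ = aI + aJ - (1 - \<theta>) * (aI + aJ)"
    "(1 - \<theta>) * (\<bar>hI\<bar> + \<bar>hJ\<bar>) = (1 - \<theta>) * \<bar>hI\<bar> + (1 - \<theta>) * \<bar>hJ\<bar>"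
    by (simp_all add: algebra_simps)
  consider "c \<le> aI + aJ" | "c \<le> min 1 (z + hI) - max 0 (z - hJ)"
    using assms(1) by blast
  then show ?thesis
  proof cases
    case 1
    then have "c - (e + 6 * \<delta>) \<le> x1I - x1J"
      using assms(3,4,6,7) eqs by linarith
    then show ?thesis ..
  next
    case 2
    then have "c - (e + 6 * \<delta>) \<le> x2I - x2J"
      using assms(3,5,8,9) eqs min_max by linarith
    then show ?thesis ..
  qed
qed

lemma c_coef_le:
  "c_coef n r \<omega> \<eta> i j \<le> h_coef n r \<omega> \<eta> i j + h_coef n r \<omega> \<eta> j i"
  "c_coef n r \<omega> \<eta> i j \<le> 1 - (a_coef n \<omega> \<eta> i - h_coef n r \<omega> \<eta> i j)
       * (if a_coef n \<omega> \<eta> i > h_coef n r \<omega> \<eta> i j then 1 else 0)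
     - (a_coef n \<omega> \<eta> j - h_coef n r \<omega> \<eta> j i)
       * (if a_coef n \<omega> \<eta> j > h_coef n r \<omega> \<eta> j i then 1 else 0)"
  "c_coef n r \<omega> \<eta> i j \<le> 1"
  unfolding c_coef_def by auto

definition split_coef :: "real \<Rightarrow> nat \<Rightarrow> nat \<Rightarrow> nat \<Rightarrow> real" where
  "split_coef \<theta> I J k = (if k = I then \<theta> else if k = J then - \<theta> else 0)"

lemma split_second_step:
  fixes x1 x2 :: "nat \<Rightarrow> real"
  assumes "3 \<le> n" "\<forall>k<n. 0 \<le> \<omega> k \<and> \<omega> k < 1" "0 < \<eta>" "I < n" "J < n" "I \<noteq> J"
    and "0 < \<theta>" "0 \<le> \<delta>" "\<forall>k<n. 0 \<le> r k"
    and "\<forall>l<n. \<bar>x1 l - (z + (if l = I then \<theta> * a_coef n \<omega> \<eta> I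
                            else if l = J then - (\<theta> * a_coef n \<omega> \<eta> J) else 0))\<bar> \<le> 2 * \<delta>"
    and "x2 = step n r \<omega> x1 (\<lambda>l k. split_coef \<theta> I J k * \<eta>) b1" "\<forall>l<n. \<forall>k<n. \<bar>b1 l k\<bar> \<le> \<delta>"
    and "nbr_margin n r \<omega> \<eta> I J \<theta> (2 * \<delta>)" "nbr_margin n r \<omega> \<eta> J I \<theta> (2 * \<delta>)"
  shows "min 1 (z + \<theta> * h_coef n r \<omega> \<eta> I J) - 3 * \<delta> \<le> x2 I"
    and "x2 J \<le> max 0 (z - \<theta> * h_coef n r \<omega> \<eta> J I) + 3 * \<delta>"
proof -
  have a_pos: "0 < a_coef n \<omega> \<eta> I" "0 < a_coef n \<omega> \<eta> J"
    using a_coef_pos assms(1-5) by auto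
  have "\<bar>x2 I - proj01 (z + \<theta> * h_coef n r \<omega> \<eta> I J)\<bar> \<le> 2 * \<delta> + \<delta>"
    unfolding assms(11)
    by (intro step_split_second[OF assms(1,4-6)]) (use a_pos assms(2,4,7-10,12,13) in \<open>auto simp: split_coef_def\<close>)
  moreover have "\<bar>x2 J - proj01 (z + (- \<theta>) * h_coef n r \<omega> \<eta> J I)\<bar> \<le> 2 * \<delta> + \<delta>"
    unfolding assms(11)
    by (intro step_split_second[OF assms(1,5,4) assms(6)[symmetric]])
      (use a_pos assms(2,5-10,12,14) in \<open>auto simp: split_coef_def\<close>)
  ultimately show "min 1 (z + \<theta> * h_coef n r \<omega> \<eta> I J) - 3 * \<delta> \<le> x2 I"
    and "x2 J \<le> max 0 (z - \<theta> * h_coef n r \<omega> \<eta> J I) + 3 * \<delta>"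
    using min_le_proj01[of "z + \<theta> * h_coef n r \<omega> \<eta> I J"] proj01_le_max[of "z - \<theta> * h_coef n r \<omega> \<eta> J I"]
    by (auto simp: abs_le_iff)
qed

lemma split_phase:
  fixes n I J :: nat and r \<omega> x0 x1 x2 :: "nat \<Rightarrow> real" and \<eta> \<theta> \<delta> z e \<epsilon> :: real
  defines "aI \<equiv> a_coef n \<omega> \<eta> I" and "aJ \<equiv> a_coef n \<omega> \<eta> J"
    and "hI \<equiv> h_coef n r \<omega> \<eta> I J" and "hJ \<equiv> h_coef n r \<omega> \<eta> J I"
  assumes "3 \<le> n" "\<forall>k<n. 0 \<le> \<omega> k \<and> \<omega> k < 1" "0 < \<eta>" "I < n" "J < n" "I \<noteq> J"
    and "0 < \<theta>" "\<theta> < 1" "0 \<le> \<delta>" "\<forall>k<n. 2 * \<delta> \<le> r k"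
    and "\<forall>l<n. \<bar>x0 l - z\<bar> \<le> \<delta>" "z = split_point aI aJ hI hJ"
    and "x1 = step n r \<omega> x0 (\<lambda>l k. split_coef \<theta> I J k * \<eta>) b0"
    and "x2 = step n r \<omega> x1 (\<lambda>l k. split_coef \<theta> I J k * \<eta>) b1"
    and "\<forall>l<n. \<forall>k<n. \<bar>b0 l k\<bar> \<le> \<delta>" "\<forall>l<n. \<forall>k<n. \<bar>b1 l k\<bar> \<le> \<delta>"
    and "1 < aI + aJ \<longrightarrow> 1 \<le> \<theta> * (aI + aJ)"
    and "nbr_margin n r \<omega> \<eta> I J \<theta> (2 * \<delta>)" "nbr_margin n r \<omega> \<eta> J I \<theta> (2 * \<delta>)"
    and "(1 - \<theta>) * (aI + aJ) \<le> e" "(1 - \<theta>) * (\<bar>hI\<bar> + \<bar>hJ\<bar>) \<le> e" "e + 6 * \<delta> \<le> \<epsilon>"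
  shows "c_coef n r \<omega> \<eta> I J - \<epsilon> \<le> \<bar>x1 I - x1 J\<bar> \<or> c_coef n r \<omega> \<eta> I J - \<epsilon> \<le> \<bar>x2 I - x2 J\<bar>"
proof -
  have a_pos: "0 < aI" "0 < aJ"
    unfolding aI_def aJ_def using a_coef_pos assms(5-10) by auto
  have rpos: "\<forall>k<n. 0 \<le> r k"
    using assms(13,14) by fastforce
  have \<omega>_le: "\<forall>k<n. \<omega> k \<le> 1"
    using assms(6) by (simp add: less_imp_le)
  have complete: "\<forall>l<n. \<bar>x0 l - x0 k\<bar> \<le> r k" if "k < n" for k
    using spread_if_near[OF assms(15)] assms(14) that unfolding spread_def by (meson order_trans)
  have first: "\<bar>x1 k - proj01 (z + split_coef \<theta> I J k * a_coef n \<omega> \<eta> k)\<bar> \<le> 2 * \<delta>" if "k < n" for k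
    using abs_step_uniform_input_le[of n k r \<omega> \<delta> \<eta> x0 z \<delta> "\<lambda>l k. split_coef \<theta> I J k * \<eta>"
        "split_coef \<theta> I J k" b0] assms(5-7,13,15,17,19) \<omega>_le rpos complete[OF that] that by simp
  then have x1I: "\<bar>x1 I - proj01 (z + \<theta> * aI)\<bar> \<le> 2 * \<delta>"
    and x1J: "\<bar>x1 J - proj01 (z - \<theta> * aJ)\<bar> \<le> 2 * \<delta>"
    using assms(8-10) unfolding split_coef_def aI_def aJ_def by (force, force)
  show ?thesis
  proof (cases "1 < aI + aJ")
    case True
    then have "proj01 (z + \<theta> * aI) = 1" "proj01 (z - \<theta> * aJ) = 0"
      using split_point_saturates[OF a_pos True, of \<theta> hI hJ] assms(16,21) unfolding proj01_def by auto
    then have "1 - 4 * \<delta> \<le> x1 I - x1 J"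
      using x1I x1J by (simp add: abs_le_iff)
    moreover have "0 \<le> (1 - \<theta>) * (aI + aJ)"
      using assms(12) a_pos by simp
    ultimately show ?thesis
      using c_coef_le(3)[of n r \<omega> \<eta> I J] assms(13,24,26) by auto
  next
    case False
    then have z: "aJ \<le> z" "z \<le> 1 - aI"
      using split_point_between assms(16) by auto
    have "\<theta> * aI \<le> aI" "\<theta> * aJ \<le> aJ" "0 \<le> \<theta> * aI" "0 \<le> \<theta> * aJ"
      using a_pos assms(11,12) by simp_all
    then have "proj01 (z + \<theta> * aI) = z + \<theta> * aI" "proj01 (z - \<theta> * aJ) = z - \<theta> * aJ"
      "proj01 z = z"
      using z a_pos by (intro proj01_eq_self; linarith)+
    moreover have "\<bar>x1 l - z\<bar> \<le> 2 * \<delta>" if "l < n" "l \<noteq> I" "l \<noteq> J" for l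
      using first[OF that(1)] that(2,3) \<open>proj01 z = z\<close> unfolding split_coef_def by simp
    ultimately have config: "\<forall>l<n. \<bar>x1 l - (z + (if l = I then \<theta> * aI else if l = J then - (\<theta> * aJ) else 0))\<bar> \<le> 2 * \<delta>"
      using x1I x1J by auto
    have "min 1 (z + \<theta> * hI) - 3 * \<delta> \<le> x2 I" "x2 J \<le> max 0 (z - \<theta> * hJ) + 3 * \<delta>"
      using split_second_step[OF assms(5-11,13) rpos _ assms(18,20,22,23)] config
      unfolding aI_def aJ_def hI_def hJ_def by simp_all
    moreover have "z + \<theta> * aI - 2 * \<delta> \<le> x1 I" "x1 J \<le> z - \<theta> * aJ + 2 * \<delta>"
      using x1I x1J \<open>proj01 (z + \<theta> * aI) = z + \<theta> * aI\<close> \<open>proj01 (z - \<theta> * aJ) = z - \<theta> * aJ\<close>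
      by (auto simp: abs_le_iff)
    moreover have "c_coef n r \<omega> \<eta> I J \<le> aI + aJ \<or> c_coef n r \<omega> \<eta> I J \<le> min 1 (z + hI) - max 0 (z - hJ)"
      using split_point_gap[of aI aJ] c_coef_le(1,2)[of n r \<omega> \<eta> I J] False assms(16)
      unfolding aI_def aJ_def hI_def hJ_def by auto
    ultimately have "c_coef n r \<omega> \<eta> I J - (e + 6 * \<delta>) \<le> x1 I - x1 J
        \<or> c_coef n r \<omega> \<eta> I J - (e + 6 * \<delta>) \<le> x2 I - x2 J"
      using separation_gap_perturbed[of "c_coef n r \<omega> \<eta> I J" aI aJ z hI hJ \<theta> \<delta> e] assms(12,13,24,25) by auto
    then show ?thesis
      using assms(26) by auto
  qed
qed

section \<open>The three-phase control\<close>

definition three_phase_input :: "nat \<Rightarrow> (nat \<Rightarrow> real) \<Rightarrow> real \<Rightarrow> nat \<Rightarrow> nat \<Rightarrow> real \<Rightarrow> real \<Rightarrow> real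
    \<Rightarrow> nat \<Rightarrow> nat \<Rightarrow> nat \<Rightarrow> (nat \<Rightarrow> real) \<Rightarrow> nat \<Rightarrow> nat \<Rightarrow> real" where
  "three_phase_input n \<omega> \<eta> K N dm z \<theta> I J t x l k =
    (if t < K then 0
     else if t < K + N then shift_input n \<omega> \<eta> (clamp dm (z - xave n x)) k
     else split_coef \<theta> I J k * \<eta>)"

lemma abs_three_phase_input_le:
  assumes "1 < n" "\<omega> k < 1" "0 < \<eta>" "0 \<le> dm" "dm \<le> a_coef n \<omega> \<eta> k / 2"
    and "2 * \<delta> \<le> \<eta>" "\<delta> \<le> (1 - \<theta>) * \<eta>" "0 \<le> \<theta>"
  shows "\<bar>three_phase_input n \<omega> \<eta> K N dm z \<theta> I J t x l k\<bar> \<le> \<eta> - \<delta>"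
proof -
  have a: "0 < a_coef n \<omega> \<eta> k"
    using a_coef_pos assms(1-3) by blast
  have "\<bar>clamp dm y\<bar> \<le> a_coef n \<omega> \<eta> k / 2" for y
    unfolding clamp_def using assms(4,5) by (auto simp: abs_le_iff)
  then have "\<bar>shift_input n \<omega> \<eta> (clamp dm (z - xave n x)) k\<bar> \<le> \<eta> / 2"
    unfolding shift_input_def using a assms(3) by (simp add: abs_mult abs_divide field_simps)
  moreover have "\<bar>split_coef \<theta> I J k * \<eta>\<bar> \<le> \<theta> * \<eta>"
    unfolding split_coef_def using assms(3,8) by (simp add: abs_mult)
  ultimately show ?thesis
    unfolding three_phase_input_def using assms(6,7) by (auto simp: algebra_simps)
qed

lemma in_cube_trajectory:
  "in_cube n (X 0) \<Longrightarrow> \<forall>t. X (Suc t) = step n r \<omega> (X t) (U t (X t)) (B t) \<Longrightarrow> in_cube n (X t)"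
  by (cases t) (simp_all add: in_cube_step)

lemma three_phase_separates:
  fixes n I J K N :: nat and r \<omega> :: "nat \<Rightarrow> real" and X :: "nat \<Rightarrow> nat \<Rightarrow> real"
    and B :: "nat \<Rightarrow> nat \<Rightarrow> nat \<Rightarrow> real" and \<eta> \<epsilon> wm \<rho> \<delta> dm \<theta> e z :: real
  defines "aI \<equiv> a_coef n \<omega> \<eta> I" and "aJ \<equiv> a_coef n \<omega> \<eta> J"
    and "hI \<equiv> h_coef n r \<omega> \<eta> I J" and "hJ \<equiv> h_coef n r \<omega> \<eta> J I"
  assumes "3 \<le> n" "\<forall>k<n. 0 < \<omega> k \<and> \<omega> k < 1" "0 < \<eta>" "I < n" "J < n" "I \<noteq> J"
    and "0 \<le> wm" "\<forall>k<n. wm \<le> \<omega> k" "\<forall>k<n. \<rho> \<le> r k"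
    and "(1 - wm) ^ K + 2 * real K * \<delta> \<le> \<rho>" "2 * \<delta> \<le> \<rho>"
    and "0 \<le> \<delta>" "2 * \<delta> \<le> dm" "1 < real N * dm / 2"
    and "0 < \<theta>" "\<theta> < 1" "1 < aI + aJ \<longrightarrow> 1 \<le> \<theta> * (aI + aJ)"
    and "nbr_margin n r \<omega> \<eta> I J \<theta> (2 * \<delta>)" "nbr_margin n r \<omega> \<eta> J I \<theta> (2 * \<delta>)"
    and "(1 - \<theta>) * (aI + aJ) \<le> e" "(1 - \<theta>) * (\<bar>hI\<bar> + \<bar>hJ\<bar>) \<le> e" "e + 6 * \<delta> \<le> \<epsilon>"
    and "z = split_point aI aJ hI hJ"
    and "in_cube n (X 0)"
    and "\<forall>t. X (Suc t) = step n r \<omega> (X t) (three_phase_input n \<omega> \<eta> K N dm z \<theta> I J t (X t)) (B t)"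
    and "\<forall>t. \<forall>l<n. \<forall>k<n. \<bar>B t l k\<bar> \<le> \<delta>"
  shows "\<exists>t. 1 \<le> t \<and> t \<le> K + N + 2 \<and> c_coef n r \<omega> \<eta> I J - \<epsilon> \<le> \<bar>X t I - X t J\<bar>"
proof -
  have cube: "\<forall>t. in_cube n (X t)"
    using in_cube_trajectory assms(28,29) by blast
  have "\<forall>k<n. 0 \<le> r k" "\<forall>k<n. 0 \<le> \<omega> k \<and> \<omega> k \<le> 1"
    using assms(6,13,15,16) by (auto simp: less_imp_le)
  then have "spread n (X K) \<rho>"
    using spread_zero_input_phase[of n r wm \<omega> \<delta> X K B] assms(5,11,12,14,16,28-30) spread_mono
    unfolding three_phase_input_def by fastforce
  moreover have "0 \<le> z" "z \<le> 1"
    using split_point_in_unit a_coef_pos assms(5-9,27) unfolding aI_def aJ_def by auto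
  ultimately have "\<forall>l<n. \<bar>X (K + N) l - z\<bar> \<le> \<delta>"
    using steering_phase[of n \<omega> \<eta> \<delta> dm z \<rho> r N "\<lambda>t. X (K + t)" "\<lambda>t. B (K + t)"] assms(5-7,13,15-18,29,30) cube
    unfolding three_phase_input_def by (auto simp: less_imp_le)
  moreover have "\<forall>k<n. 0 \<le> \<omega> k \<and> \<omega> k < 1" "\<forall>k<n. 2 * \<delta> \<le> r k"
    using assms(6,13,15) by (auto simp: less_imp_le)
  moreover have "X (K + N + 1) = step n r \<omega> (X (K + N)) (\<lambda>l k. split_coef \<theta> I J k * \<eta>) (B (K + N))"
    and "X (K + N + 2) = step n r \<omega> (X (K + N + 1)) (\<lambda>l k. split_coef \<theta> I J k * \<eta>) (B (K + N + 1))"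
    using assms(29) unfolding three_phase_input_def by (simp_all add: numeral_2_eq_2)
  moreover have "\<forall>l<n. \<forall>k<n. \<bar>B (K + N) l k\<bar> \<le> \<delta>" "\<forall>l<n. \<forall>k<n. \<bar>B (K + N + 1) l k\<bar> \<le> \<delta>"
    using assms(30) by simp_all
  ultimately have "c_coef n r \<omega> \<eta> I J - \<epsilon> \<le> \<bar>X (K + N + 1) I - X (K + N + 1) J\<bar>
      \<or> c_coef n r \<omega> \<eta> I J - \<epsilon> \<le> \<bar>X (K + N + 2) I - X (K + N + 2) J\<bar>"
    using split_phase[OF assms(5) _ assms(7-10,19,20,16)] assms(21-27) unfolding aI_def aJ_def hI_def hJ_def by blast
  then show ?thesis
  proof
    assume "c_coef n r \<omega> \<eta> I J - \<epsilon> \<le> \<bar>X (K + N + 1) I - X (K + N + 1) J\<bar>"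
    then show ?thesis
      by (intro exI[of _ "K + N + 1"]) simp
  next
    assume "c_coef n r \<omega> \<eta> I J - \<epsilon> \<le> \<bar>X (K + N + 2) I - X (K + N + 2) J\<bar>"
    then show ?thesis
      by (intro exI[of _ "K + N + 2"]) simp
  qed
qed

section \<open>Choice of the parameters\<close>

lemma eventually_less_mult_at_left_1:
  fixes p a :: real
  shows "\<forall>\<^sub>F \<theta> in at_left 1. p < a \<longrightarrow> p < \<theta> * a"
proof (cases "p < a")
  case True
  have "((\<lambda>\<theta>. \<theta> * a) \<longlongrightarrow> 1 * a) (at_left 1)"
    by (intro tendsto_intros)
  then show ?thesis
    using order_tendstoD(1)[of "\<lambda>\<theta>. \<theta> * a" a] True by (auto elim: eventually_mono)
qed simp

lemma eventually_one_minus_mult_le_at_left_1: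
  fixes B e :: real
  assumes "0 < e"
  shows "\<forall>\<^sub>F \<theta> in at_left 1. (1 - \<theta>) * B \<le> e"
proof -
  have "((\<lambda>\<theta>. (1 - \<theta>) * B) \<longlongrightarrow> (1 - 1) * B) (at_left 1)"
    by (intro tendsto_intros)
  then have "((\<lambda>\<theta>. (1 - \<theta>) * B) \<longlongrightarrow> 0) (at_left 1)"
    by simp
  from order_tendstoD(2)[OF this assms] show ?thesis
    by (rule eventually_mono) simp
qed

lemma eventually_mult_less_at_right_0:
  fixes c g :: real
  assumes "0 < g"
  shows "\<forall>\<^sub>F \<delta> in at_right 0. c * \<delta> < g"
proof -
  have "((\<lambda>\<delta>. c * \<delta>) \<longlongrightarrow> c * 0) (at_right 0)"
    by (intro tendsto_intros)
  then show ?thesis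
    using order_tendstoD(2) assms by fastforce
qed

lemma eventually_nbr_margin:
  assumes "0 < a_coef n \<omega> \<eta> i" "0 < a_coef n \<omega> \<eta> j" "\<theta> < 1"
    and "r i < a_coef n \<omega> \<eta> i \<longrightarrow> r i < \<theta> * a_coef n \<omega> \<eta> i"
    and "r i < a_coef n \<omega> \<eta> i + a_coef n \<omega> \<eta> j
      \<longrightarrow> r i < \<theta> * (a_coef n \<omega> \<eta> i + a_coef n \<omega> \<eta> j)"
  shows "\<forall>\<^sub>F \<delta> in at_right 0. nbr_margin n r \<omega> \<eta> i j \<theta> (2 * \<delta>)"
proof -
  define A where "A = a_coef n \<omega> \<eta> i"
  define A' where "A' = a_coef n \<omega> \<eta> j"
  have small: "\<forall>\<^sub>F \<delta> in at_right 0. 4 * \<delta> < g" if "0 < g" for g :: real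
    using eventually_mult_less_at_right_0[OF that] .
  have "\<theta> * A < A" "\<theta> * (A + A') < A + A'"
    using assms(1-3) unfolding A_def A'_def by simp_all
  consider "r i < A" | "A \<le> r i" "r i < A + A'" | "A + A' \<le> r i"
    by linarith
  then show ?thesis
  proof cases
    case 1
    then have "0 < \<theta> * A - r i"
      using assms(4) unfolding A_def by simp
    from small[OF this] show ?thesis
      unfolding nbr_margin_def by (rule eventually_mono) (use 1 in \<open>simp add: A_def\<close>)
  next
    case 2
    then have "0 < r i - \<theta> * A" "0 < \<theta> * (A + A') - r i"
      using \<open>\<theta> * A < A\<close> assms(5) unfolding A_def A'_def by auto
    from eventually_conj[OF small[OF this(1)] small[OF this(2)]] show ?thesis
      unfolding nbr_margin_def by (rule eventually_mono) (use 2 in \<open>simp add: A_def A'_def\<close>)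
  next
    case 3
    then have "0 < r i - \<theta> * (A + A')"
      using \<open>\<theta> * (A + A') < A + A'\<close> by simp
    from small[OF this] show ?thesis
      unfolding nbr_margin_def by (rule eventually_mono) (use 3 assms(2) in \<open>auto simp: A_def A'_def\<close>)
  qed
qed

lemma exists_split_rate:
  fixes aI aJ hI hJ rI rJ e :: real
  assumes "0 < e"
  obtains \<theta> where "0 < \<theta>" "\<theta> < 1"
    "rI < aI \<longrightarrow> rI < \<theta> * aI" "rI < aI + aJ \<longrightarrow> rI < \<theta> * (aI + aJ)"
    "rJ < aJ \<longrightarrow> rJ < \<theta> * aJ" "rJ < aJ + aI \<longrightarrow> rJ < \<theta> * (aJ + aI)"
    "1 < aI + aJ \<longrightarrow> 1 < \<theta> * (aI + aJ)"
    "(1 - \<theta>) * (aI + aJ) \<le> e" "(1 - \<theta>) * (\<bar>hI\<bar> + \<bar>hJ\<bar>) \<le> e"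
proof -
  from eventually_at_left_real[OF zero_less_one]
    eventually_less_mult_at_left_1[of rI aI] eventually_less_mult_at_left_1[of rI "aI + aJ"]
    eventually_less_mult_at_left_1[of rJ aJ] eventually_less_mult_at_left_1[of rJ "aJ + aI"]
    eventually_less_mult_at_left_1[of 1 "aI + aJ"]
    eventually_one_minus_mult_le_at_left_1[OF assms, of "aI + aJ"]
    eventually_one_minus_mult_le_at_left_1[OF assms, of "\<bar>hI\<bar> + \<bar>hJ\<bar>"]
  have "\<forall>\<^sub>F \<theta> in at_left 1. 0 < \<theta> \<and> \<theta> < 1
      \<and> (rI < aI \<longrightarrow> rI < \<theta> * aI) \<and> (rI < aI + aJ \<longrightarrow> rI < \<theta> * (aI + aJ))
      \<and> (rJ < aJ \<longrightarrow> rJ < \<theta> * aJ) \<and> (rJ < aJ + aI \<longrightarrow> rJ < \<theta> * (aJ + aI))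
      \<and> (1 < aI + aJ \<longrightarrow> 1 < \<theta> * (aI + aJ))
      \<and> (1 - \<theta>) * (aI + aJ) \<le> e \<and> (1 - \<theta>) * (\<bar>hI\<bar> + \<bar>hJ\<bar>) \<le> e"
    by eventually_elim auto
  then show thesis
    using that eventually_happens'[OF trivial_limit_at_left_real] by blast
qed

lemma pos_lower_bound:
  fixes f :: "nat \<Rightarrow> real"
  assumes "0 < n" "\<forall>k<n. 0 < f k"
  obtains m where "0 < m" "\<forall>k<n. m \<le> f k"
proof
  show "0 < Min (f ` {..<n})"
    using assms by (subst Min_gr_iff) auto
  show "\<forall>k<n. Min (f ` {..<n}) \<le> f k"
    by simp
qed

lemma separation_strategy:
  fixes n I J :: nat and r \<omega> :: "nat \<Rightarrow> real" and \<eta> \<epsilon> :: real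
  defines "aI \<equiv> a_coef n \<omega> \<eta> I" and "aJ \<equiv> a_coef n \<omega> \<eta> J"
    and "hI \<equiv> h_coef n r \<omega> \<eta> I J" and "hJ \<equiv> h_coef n r \<omega> \<eta> J I"
  assumes "3 \<le> n" "\<forall>k<n. 0 < r k" "\<forall>k<n. 0 < \<omega> k \<and> \<omega> k < 1" "0 < \<eta>" "0 < \<epsilon>"
    and "I < n" "J < n" "I \<noteq> J"
  obtains T \<delta> U where "0 < T" "0 < \<delta>" "\<delta> < \<eta>"
    "\<And>t x i j. i < n \<Longrightarrow> \<bar>U t x j i\<bar> \<le> \<eta> - \<delta>"
    "\<And>X B. in_cube n (X 0) \<Longrightarrow> \<forall>t. X (Suc t) = step n r \<omega> (X t) (U t (X t)) (B t)
       \<Longrightarrow> \<forall>t. \<forall>l<n. \<forall>k<n. \<bar>B t l k\<bar> \<le> \<delta>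
       \<Longrightarrow> \<exists>t. 1 \<le> t \<and> t \<le> T \<and> c_coef n r \<omega> \<eta> I J - \<epsilon> \<le> \<bar>X t I - X t J\<bar>"
proof -
  have "0 < n" "1 < n"
    using assms(5) by auto
  obtain wm where wm: "0 < wm" "\<forall>k<n. wm \<le> \<omega> k"
    using pos_lower_bound[of n \<omega>] \<open>0 < n\<close> assms(7) by auto
  obtain \<rho> where \<rho>: "0 < \<rho>" "\<forall>k<n. \<rho> \<le> r k"
    using pos_lower_bound[of n r] \<open>0 < n\<close> assms(6) by auto
  obtain dm where dm: "0 < dm" "\<forall>k<n. dm \<le> a_coef n \<omega> \<eta> k / 2"
    using pos_lower_bound[of n "\<lambda>k. a_coef n \<omega> \<eta> k / 2"] \<open>0 < n\<close> \<open>1 < n\<close> a_coef_pos assms(7,8) by auto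
  obtain K where K: "(1 - wm) ^ K < \<rho>"
    using real_arch_pow_inv[OF \<rho>(1), of "1 - wm"] wm(1) by auto
  obtain N :: nat where N: "2 / dm < real N"
    using reals_Archimedean2 by blast
  have a_pos: "0 < aI" "0 < aJ"
    unfolding aI_def aJ_def using a_coef_pos \<open>1 < n\<close> assms(7-11) by auto
  \<comment> \<open>all constraints are open: \<open>\<theta>\<close> is taken close to 1, then \<open>\<delta>\<close> close to 0\<close>
  have "0 < \<epsilon> / 4"
    using assms(9) by simp
  then obtain \<theta> where \<theta>: "0 < \<theta>" "\<theta> < 1"
    "r I < aI \<longrightarrow> r I < \<theta> * aI" "r I < aI + aJ \<longrightarrow> r I < \<theta> * (aI + aJ)"
    "r J < aJ \<longrightarrow> r J < \<theta> * aJ" "r J < aJ + aI \<longrightarrow> r J < \<theta> * (aJ + aI)"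
    "1 < aI + aJ \<longrightarrow> 1 < \<theta> * (aI + aJ)"
    "(1 - \<theta>) * (aI + aJ) \<le> \<epsilon> / 4" "(1 - \<theta>) * (\<bar>hI\<bar> + \<bar>hJ\<bar>) \<le> \<epsilon> / 4"
    by (rule exists_split_rate)
  have "\<forall>\<^sub>F \<delta> in at_right 0. 0 < \<delta> \<and> 2 * \<delta> < \<eta> \<and> 1 * \<delta> < (1 - \<theta>) * \<eta>
      \<and> (2 * real K) * \<delta> < \<rho> - (1 - wm) ^ K \<and> 2 * \<delta> < \<rho> \<and> 2 * \<delta> < dm \<and> 6 * \<delta> < \<epsilon> / 2
      \<and> nbr_margin n r \<omega> \<eta> I J \<theta> (2 * \<delta>) \<and> nbr_margin n r \<omega> \<eta> J I \<theta> (2 * \<delta>)"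
    using eventually_nbr_margin[of n \<omega> \<eta> I J \<theta> r] eventually_nbr_margin[of n \<omega> \<eta> J I \<theta> r]
      a_pos \<theta> assms(8) \<rho>(1) dm(1) K assms(9)
    unfolding aI_def aJ_def
    by (intro eventually_conj eventually_at_right_less eventually_mult_less_at_right_0) (auto simp: add.commute)
  then obtain \<delta> where \<delta>: "0 < \<delta>" "2 * \<delta> < \<eta>" "\<delta> < (1 - \<theta>) * \<eta>"
    "2 * real K * \<delta> < \<rho> - (1 - wm) ^ K" "2 * \<delta> < \<rho>" "2 * \<delta> < dm" "6 * \<delta> < \<epsilon> / 2"
    "nbr_margin n r \<omega> \<eta> I J \<theta> (2 * \<delta>)" "nbr_margin n r \<omega> \<eta> J I \<theta> (2 * \<delta>)"
    using eventually_happens'[OF trivial_limit_at_right_real] by auto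
  show thesis
  proof (rule that[of "K + N + 2" \<delta> "three_phase_input n \<omega> \<eta> K N dm (split_point aI aJ hI hJ) \<theta> I J"])
    show "0 < K + N + 2" "0 < \<delta>" "\<delta> < \<eta>"
      using \<delta> by auto
    show "\<bar>three_phase_input n \<omega> \<eta> K N dm (split_point aI aJ hI hJ) \<theta> I J t x j i\<bar> \<le> \<eta> - \<delta>"
      if "i < n" for t x i j
      by (rule abs_three_phase_input_le[OF \<open>1 < n\<close>]) (use assms(7,8) dm \<delta>(2,3) \<theta>(1) that in auto)
    show "\<exists>t. 1 \<le> t \<and> t \<le> K + N + 2 \<and> c_coef n r \<omega> \<eta> I J - \<epsilon> \<le> \<bar>X t I - X t J\<bar>"
      if "in_cube n (X 0)" "\<forall>t. X (Suc t) = step n r \<omega> (X t)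
          (three_phase_input n \<omega> \<eta> K N dm (split_point aI aJ hI hJ) \<theta> I J t (X t)) (B t)"
        "\<forall>t. \<forall>l<n. \<forall>k<n. \<bar>B t l k\<bar> \<le> \<delta>" for X B
    proof (rule three_phase_separates[where e = "\<epsilon> / 4", OF assms(5,7,8,10-12) less_imp_le[OF wm(1)] wm(2) \<rho>(2)])
      show "(1 - wm) ^ K + 2 * real K * \<delta> \<le> \<rho>" "2 * \<delta> \<le> \<rho>" "0 \<le> \<delta>" "2 * \<delta> \<le> dm"
        "\<epsilon> / 4 + 6 * \<delta> \<le> \<epsilon>"
        using \<delta> by auto
      show "1 < real N * dm / 2"
        using N dm(1) by (simp add: field_simps)
    qed (use \<theta> \<delta> that in \<open>auto simp: aI_def aJ_def hI_def hJ_def\<close>)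
  qed
qed

lemma length_hist: "length (hist n r \<omega> uS bS x0 t) = Suc t"
  by (induction t) (simp_all add: Let_def)

text \<open>A time and state feedback \<open>U t x\<close> is a history-dependent control, and an uncertainty given as a
  function of the history is a bounded noise sequence along the generated trajectory.\<close>

lemma ft_robust_reachableI:
  assumes "0 < T" "0 < \<delta>" "\<delta> < \<eta>"
    and "\<And>t x i j. i < n \<Longrightarrow> \<bar>U t x j i\<bar> \<le> \<eta> - \<delta>"
    and "\<And>X B. in_cube n (X 0) \<Longrightarrow> \<forall>t. X (Suc t) = step n r \<omega> (X t) (U t (X t)) (B t)
       \<Longrightarrow> \<forall>t. \<forall>l<n. \<forall>k<n. \<bar>B t l k\<bar> \<le> \<delta> \<Longrightarrow> \<exists>t. 1 \<le> t \<and> t \<le> T \<and> X t \<in> S"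
  shows "ft_robust_reachable n r \<omega> \<eta> S"
proof -
  define uS where "uS H = U (length H - 1) (last H)" for H :: "(nat \<Rightarrow> real) list"
  have reach: "\<exists>t\<ge>1. t \<le> T \<and> last (hist n r \<omega> uS bS x0 t) \<in> S"
    if "in_cube n x0" and bS: "\<forall>H i j. i < n \<longrightarrow> j < n \<longrightarrow> - \<delta> \<le> bS H j i \<and> bS H j i \<le> \<delta>"
    for x0 bS
  proof -
    have "\<exists>t. 1 \<le> t \<and> t \<le> T \<and> last (hist n r \<omega> uS bS x0 t) \<in> S"
    proof (rule assms(5)[of "\<lambda>t. last (hist n r \<omega> uS bS x0 t)" "\<lambda>t. bS (hist n r \<omega> uS bS x0 t)"])
      show "in_cube n (last (hist n r \<omega> uS bS x0 0))"
        using that(1) by simp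
      show "\<forall>t. last (hist n r \<omega> uS bS x0 (Suc t)) = step n r \<omega> (last (hist n r \<omega> uS bS x0 t))
          (U t (last (hist n r \<omega> uS bS x0 t))) (bS (hist n r \<omega> uS bS x0 t))"
        by (simp add: Let_def uS_def length_hist)
      show "\<forall>t. \<forall>l<n. \<forall>k<n. \<bar>bS (hist n r \<omega> uS bS x0 t) l k\<bar> \<le> \<delta>"
      proof (intro allI impI)
        fix t l k assume "l < n" "k < n"
        then show "\<bar>bS (hist n r \<omega> uS bS x0 t) l k\<bar> \<le> \<delta>"
          using bS[rule_format, of k l "hist n r \<omega> uS bS x0 t"] by (simp add: abs_le_iff)
      qed
    qed
    then show ?thesis
      by auto
  qed
  have uS_bound: "\<delta> - \<eta> \<le> uS H j i" "uS H j i \<le> \<eta> - \<delta>" if "i < n" for H i j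
    using assms(4)[of i "length H - 1" "last H" j, OF that] unfolding uS_def by (simp_all add: abs_le_iff)
  show ?thesis
    unfolding ft_robust_reachable_def
    by (intro reach exI[of _ T] exI[of _ \<delta>] conjI allI impI disjI2 exI[of _ "\<lambda>_ _. \<delta>"] exI[of _ uS])
      (simp_all add: assms(1-3) uS_bound)
qed

lemma c_eps_attained:
  assumes "2 \<le> n"
  obtains I J where "I < n" "J < n" "I \<noteq> J" "c_eps n r \<omega> \<eta> \<epsilon> = c_coef n r \<omega> \<eta> I J - \<epsilon>"
proof -
  define C where "C = {c_coef n r \<omega> \<eta> i j | i j. i < n \<and> j < n \<and> i \<noteq> j}"
  have "C \<subseteq> (\<lambda>p. c_coef n r \<omega> \<eta> (fst p) (snd p)) ` ({..<n} \<times> {..<n})"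
    unfolding C_def by force
  then have "finite C"
    by (rule finite_subset) simp
  moreover have "c_coef n r \<omega> \<eta> 0 1 \<in> C"
    unfolding C_def using assms by force
  ultimately have "Max C \<in> C"
    using Max_in by blast
  then obtain I J where "I < n" "J < n" "I \<noteq> J" "Max C = c_coef n r \<omega> \<eta> I J"
    unfolding C_def by blast
  moreover have "c_eps n r \<omega> \<eta> \<epsilon> = Max C - \<epsilon>"
    unfolding c_eps_def C_def ..
  ultimately show thesis
    using that by simp
qed

lemma E_set_memI:
  assumes "in_cube n x" "I < n" "J < n" "c \<le> \<bar>x I - x J\<bar>"
  shows "x \<in> E_set n c"
proof -
  let ?D = "{\<bar>x i - x j\<bar> | i j. i < n \<and> j < n}"
  have "?D \<subseteq> (\<lambda>p. \<bar>x (fst p) - x (snd p)\<bar>) ` ({..<n} \<times> {..<n})"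
    by force
  then have "finite ?D"
    by (rule finite_subset) simp
  moreover have "\<bar>x I - x J\<bar> \<in> ?D"
    using assms(2,3) by blast
  ultimately have "\<bar>x I - x J\<bar> \<le> Max ?D"
    by (rule Max_ge)
  then show ?thesis
    unfolding E_set_def using assms(1,4) by simp
qed

theorem lemma9:
  fixes n :: nat and r \<omega> :: "nat \<Rightarrow> real" and \<eta> \<epsilon> :: real
  assumes "n \<ge> 3"
    and "\<forall>i<n. 0 < r i \<and> r i \<le> 1"
    and "\<forall>i<n. 0 < \<omega> i \<and> \<omega> i < 1"
    and "\<eta> > 0"
    and "\<epsilon> > 0"
  shows "ft_robust_reachable n r \<omega> \<eta> (E_set n (c_eps n r \<omega> \<eta> \<epsilon>))"
proof -
  obtain I J where IJ: "I < n" "J < n" "I \<noteq> J"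
    and c: "c_eps n r \<omega> \<eta> \<epsilon> = c_coef n r \<omega> \<eta> I J - \<epsilon>"
    using c_eps_attained[of n r \<omega> \<eta> \<epsilon>] assms(1) by auto
  obtain T \<delta> U where "0 < T" "0 < \<delta>" "\<delta> < \<eta>" "\<And>t x i j. i < n \<Longrightarrow> \<bar>U t x j i\<bar> \<le> \<eta> - \<delta>"
    and separates: "\<And>X B. in_cube n (X 0) \<Longrightarrow> \<forall>t. X (Suc t) = step n r \<omega> (X t) (U t (X t)) (B t)
       \<Longrightarrow> \<forall>t. \<forall>l<n. \<forall>k<n. \<bar>B t l k\<bar> \<le> \<delta>
       \<Longrightarrow> \<exists>t. 1 \<le> t \<and> t \<le> T \<and> c_coef n r \<omega> \<eta> I J - \<epsilon> \<le> \<bar>X t I - X t J\<bar>"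
    by (rule separation_strategy[OF assms(1) _ assms(3-5) IJ]) (use assms(2) in auto)
  show ?thesis
  proof (rule ft_robust_reachableI[where T = T and \<delta> = \<delta> and U = U])
    fix X B assume "in_cube n (X 0)" and dyn: "\<forall>t. X (Suc t) = step n r \<omega> (X t) (U t (X t)) (B t)"
      and noise: "\<forall>t. \<forall>l<n. \<forall>k<n. \<bar>B t l k\<bar> \<le> \<delta>"
    obtain t where t: "1 \<le> t" "t \<le> T" "c_coef n r \<omega> \<eta> I J - \<epsilon> \<le> \<bar>X t I - X t J\<bar>"
      using separates[OF \<open>in_cube n (X 0)\<close> dyn noise] by blast
    then have "X t \<in> E_set n (c_eps n r \<omega> \<eta> \<epsilon>)"
      using E_set_memI[OF in_cube_trajectory[of n X r \<omega> U B t, OF \<open>in_cube n (X 0)\<close> dyn] IJ(1,2)] c by simp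
    with t show "\<exists>t. 1 \<le> t \<and> t \<le> T \<and> X t \<in> E_set n (c_eps n r \<omega> \<eta> \<epsilon>)"
      by blast
  qed fact+
qed

end
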